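(* Let $A$ be a reversible $JW$-algebra with a faithful normal state $\rho$. Let $0<\varepsilon<1/16$ and let $D_m\in A^+$ ($m=1,2,\dots$) satisfy $\sum_{m=1}^\infty\rho(D_m)<\varepsilon$. Then there exists a projection $E\in A$ such that $\rho({\bf 1}-E)<2\varepsilon^{1/4}$ and $\left\|E\left(\sum_{k=1}^m D_k\right)E\right\|<4\varepsilon^{1/2}$ for all $m=1,2,\dots$.
   Context: A $JW$-algebra is a real linear space of self-adjoint operators in $B(H)$ ($H$ a complex Hilbert space), containing the identity ${\bf 1}$, closed under the Jordan product $a\circ b=\frac12(ab+ba)$ and closed in the weak operator topology; it is reversible if $a_1a_2\cdots a_n+a_na_{n-1}\cdots a_1\in A$ whenever $a_1,\dots,a_n\in A$. $A^+$ denotes the positive elements of $A$. *)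

theory Defs
  imports "HOL-Analysis.Analysis"
begin

text \<open>A complex Hilbert space is modelled as a real Hilbert space H (type class
real_inner + complete_space) together with a complex structure J (multiplication
by the imaginary unit): a bounded real-linear isometry with J o J = -1.
Complex scalar multiplication is (a + b i) x = a x + b J x, and the complex inner
product is determined by the real one (its real part). B(H), the complex-linear
bounded operators, are the bounded real-linear operators commuting with J.\<close>

definition complex_structure :: "('h::{real_inner,complete_space} \<Rightarrow>\<^sub>L 'h) \<Rightarrow> bool" where
  "complex_structure J \<longleftrightarrow> J o\<^sub>L J = - id_blinfun \<and> (\<forall>x y. inner (J x) (J y) = inner x y)"

definition BH :: "('h::{real_inner,complete_space} \<Rightarrow>\<^sub>L 'h) \<Rightarrow> ('h \<Rightarrow>\<^sub>L 'h) set" where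
  "BH J = {T. T o\<^sub>L J = J o\<^sub>L T}"

definition self_adj :: "('h::{real_inner,complete_space} \<Rightarrow>\<^sub>L 'h) \<Rightarrow> ('h \<Rightarrow>\<^sub>L 'h) \<Rightarrow> bool" where
  "self_adj J T \<longleftrightarrow> T \<in> BH J \<and> (\<forall>x y. inner (T x) y = inner x (T y))"

definition positive_op :: "('h::{real_inner,complete_space} \<Rightarrow>\<^sub>L 'h) \<Rightarrow> ('h \<Rightarrow>\<^sub>L 'h) \<Rightarrow> bool" where
  "positive_op J T \<longleftrightarrow> self_adj J T \<and> (\<forall>x. 0 \<le> inner (blinfun_apply T x) x)"

definition op_le :: "('h::{real_inner,complete_space} \<Rightarrow>\<^sub>L 'h) \<Rightarrow> ('h \<Rightarrow>\<^sub>L 'h) \<Rightarrow> ('h \<Rightarrow>\<^sub>L 'h) \<Rightarrow> bool" where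
  "op_le J S T \<longleftrightarrow> self_adj J S \<and> self_adj J T \<and> positive_op J (T - S)"

definition jordan_prod :: "('h::real_normed_vector \<Rightarrow>\<^sub>L 'h) \<Rightarrow> ('h \<Rightarrow>\<^sub>L 'h) \<Rightarrow> ('h \<Rightarrow>\<^sub>L 'h)" where
  "jordan_prod a b = (1/2) *\<^sub>R (a o\<^sub>L b + b o\<^sub>L a)"

text \<open>Closedness in the weak operator topology: T (in B(H)) lies in the WOT-closure of A iff
for all finitely many vectors x_i, y_i and e > 0 some a in A has |<(T - a) x_i, y_i>| < e;
since the complex inner product is <u,v> + i <u, J v> (real parts), it suffices to use the
real inner product.\<close>
definition wot_closed :: "('h::{real_inner,complete_space} \<Rightarrow>\<^sub>L 'h) \<Rightarrow> ('h \<Rightarrow>\<^sub>L 'h) set \<Rightarrow> bool" where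
  "wot_closed J A \<longleftrightarrow> (\<forall>T::'h \<Rightarrow>\<^sub>L 'h. T \<in> BH J \<longrightarrow>
     (\<forall>F e. finite F \<and> e > 0 \<longrightarrow> (\<exists>a\<in>A. \<forall>(x,y)\<in>F. \<bar>inner (blinfun_apply (T - a) x) y\<bar> < e)) \<longrightarrow> T \<in> A)"

definition JW_algebra :: "('h::{real_inner,complete_space} \<Rightarrow>\<^sub>L 'h) \<Rightarrow> ('h \<Rightarrow>\<^sub>L 'h) set \<Rightarrow> bool" where
  "JW_algebra J A \<longleftrightarrow> complex_structure J \<and>
     (\<forall>a\<in>A. self_adj J a) \<and> id_blinfun \<in> A \<and> 0 \<in> A \<and>
     (\<forall>a\<in>A. \<forall>b\<in>A. a + b \<in> A) \<and> (\<forall>c. \<forall>a\<in>A. c *\<^sub>R a \<in> A) \<and>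
     (\<forall>a\<in>A. \<forall>b\<in>A. jordan_prod a b \<in> A) \<and> wot_closed J A"

definition list_prod :: "('h::real_normed_vector \<Rightarrow>\<^sub>L 'h) list \<Rightarrow> ('h \<Rightarrow>\<^sub>L 'h)" where
  "list_prod as = foldr (\<lambda>a b. a o\<^sub>L b) as id_blinfun"

definition reversible :: "('h::real_normed_vector \<Rightarrow>\<^sub>L 'h) set \<Rightarrow> bool" where
  "reversible A \<longleftrightarrow> (\<forall>as. as \<noteq> [] \<and> set as \<subseteq> A \<longrightarrow> list_prod as + list_prod (rev as) \<in> A)"

definition pos_part :: "('h::{real_inner,complete_space} \<Rightarrow>\<^sub>L 'h) \<Rightarrow> ('h \<Rightarrow>\<^sub>L 'h) set \<Rightarrow> ('h \<Rightarrow>\<^sub>L 'h) set" where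
  "pos_part J A = {a\<in>A. positive_op J a}"

definition is_state :: "('h::{real_inner,complete_space} \<Rightarrow>\<^sub>L 'h) \<Rightarrow> ('h \<Rightarrow>\<^sub>L 'h) set \<Rightarrow> (('h \<Rightarrow>\<^sub>L 'h) \<Rightarrow> real) \<Rightarrow> bool" where
  "is_state J A \<rho> \<longleftrightarrow> (\<forall>a\<in>A. \<forall>b\<in>A. \<rho> (a + b) = \<rho> a + \<rho> b) \<and> (\<forall>c. \<forall>a\<in>A. \<rho> (c *\<^sub>R a) = c * \<rho> a)
     \<and> (\<forall>a\<in>pos_part J A. 0 \<le> \<rho> a) \<and> \<rho> id_blinfun = 1"

definition faithful_state :: "('h::{real_inner,complete_space} \<Rightarrow>\<^sub>L 'h) \<Rightarrow> ('h \<Rightarrow>\<^sub>L 'h) set \<Rightarrow> (('h \<Rightarrow>\<^sub>L 'h) \<Rightarrow> real) \<Rightarrow> bool" where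
  "faithful_state J A \<rho> \<longleftrightarrow> (\<forall>a\<in>pos_part J A. \<rho> a = 0 \<longrightarrow> a = 0)"

text \<open>Normality: \<rho>(sup a_\<alpha>) = sup \<rho>(a_\<alpha>) for every bounded increasing net in A^+;
expressed via the (nonempty, upward directed, bounded) range S of the net and its least
upper bound s among self-adjoint operators.\<close>
definition normal_state :: "('h::{real_inner,complete_space} \<Rightarrow>\<^sub>L 'h) \<Rightarrow> ('h \<Rightarrow>\<^sub>L 'h) set \<Rightarrow> (('h \<Rightarrow>\<^sub>L 'h) \<Rightarrow> real) \<Rightarrow> bool" where
  "normal_state J A \<rho> \<longleftrightarrow> (\<forall>S s. S \<noteq> {} \<and> S \<subseteq> pos_part J A \<and>
      (\<forall>x\<in>S. \<forall>y\<in>S. \<exists>z\<in>S. op_le J x z \<and> op_le J y z) \<and>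
      (\<forall>x\<in>S. op_le J x s) \<and> (\<forall>t. self_adj J t \<and> (\<forall>x\<in>S. op_le J x t) \<longrightarrow> op_le J s t)
      \<longrightarrow> \<rho> s = Sup (\<rho> ` S))"

definition is_projection :: "('h::real_normed_vector \<Rightarrow>\<^sub>L 'h) \<Rightarrow> bool" where
  "is_projection E \<longleftrightarrow> E o\<^sub>L E = E"

end

theory Submission
  imports Defs
begin

text \<open>Put \<open>T\<^sub>m = D\<^sub>1 + \<dots> + D\<^sub>m\<close>. The operators \<open>1 - (1 + T\<^sub>m)\<^sup>-\<^sup>1\<close> lie in \<open>A\<close>, increase, and are
  bounded by \<open>1\<close> and by \<open>T\<^sub>m\<close>; their strong limit \<open>R\<close> lies in \<open>A\<close>, and normality of \<open>\<rho>\<close> gives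
  \<open>\<rho>(R) \<le> \<Sum> \<rho>(D\<^sub>k) < \<epsilon>\<close>. Let \<open>E\<close> be the spectral projection of \<open>R\<close> for \<open>]-\<infinity>, \<delta>]\<close> with \<open>\<delta> = \<surd>\<epsilon>\<close>;
  it lies in \<open>A\<close> because square roots and kernel projections can be built from Jordan products
  and strong limits of monotone sequences. Then \<open>\<delta> \<rho>(1 - E) \<le> \<rho>(R) < \<delta>\<^sup>2\<close>, and on the range of \<open>E\<close>
  the bound \<open>R \<le> \<delta>\<close> forces \<open>(1 + T\<^sub>m)\<^sup>-\<^sup>1 \<ge> 1 - \<delta>\<close>, i.e. \<open>T\<^sub>m \<le> \<delta> / (1 - \<delta>) < 4\<delta>\<close>, uniformly in \<open>m\<close>.\<close>

interpretation blinfun_compose: bounded_bilinear blinfun_compose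
  by (rule bounded_bilinear_blinfun_compose)

declare plus_blinfun.rep_eq [simp] minus_blinfun.rep_eq [simp] scaleR_blinfun.rep_eq [simp]
  uminus_blinfun.rep_eq [simp] blinfun.add_right [simp] blinfun.diff_right [simp]
  blinfun.scaleR_right [simp] blinfun.minus_right [simp]

lemma blinfun_compose_assoc: "(a o\<^sub>L b) o\<^sub>L c = a o\<^sub>L (b o\<^sub>L c)"
  by (rule blinfun_eqI) simp

lemma blinfun_compose_id_left [simp]: "id_blinfun o\<^sub>L a = a"
  by (rule blinfun_eqI) simp

lemma blinfun_compose_id_right [simp]: "a o\<^sub>L id_blinfun = a"
  by (rule blinfun_eqI) simp

lemmas blinfun_compose_linear = blinfun_compose.add_left blinfun_compose.add_right
  blinfun_compose.diff_left blinfun_compose.diff_right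
  blinfun_compose.scaleR_left blinfun_compose.scaleR_right

section \<open>Symmetric and positive operators\<close>

definition sym_op :: "('h::real_inner \<Rightarrow>\<^sub>L 'h) \<Rightarrow> bool" where
  "sym_op T \<longleftrightarrow> (\<forall>x y. inner (T x) y = inner x (T y))"

definition pos_op :: "('h::real_inner \<Rightarrow>\<^sub>L 'h) \<Rightarrow> bool" where
  "pos_op T \<longleftrightarrow> sym_op T \<and> (\<forall>x. 0 \<le> inner (T x) x)"

definition loewner_le :: "('h::real_inner \<Rightarrow>\<^sub>L 'h) \<Rightarrow> ('h \<Rightarrow>\<^sub>L 'h) \<Rightarrow> bool" where
  "loewner_le S T \<longleftrightarrow> sym_op S \<and> sym_op T \<and> (\<forall>x. inner (S x) x \<le> inner (T x) x)"

lemma sym_opD: "sym_op T \<Longrightarrow> inner (T x) y = inner x (T y)"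
  by (simp add: sym_op_def)

lemma sym_op_add: "sym_op a \<Longrightarrow> sym_op b \<Longrightarrow> sym_op (a + b)"
  by (simp add: sym_op_def inner_add_left inner_add_right)

lemma sym_op_diff: "sym_op a \<Longrightarrow> sym_op b \<Longrightarrow> sym_op (a - b)"
  by (simp add: sym_op_def inner_diff_left inner_diff_right)

lemma sym_op_scaleR: "sym_op a \<Longrightarrow> sym_op (r *\<^sub>R a)"
  by (simp add: sym_op_def)

lemma sym_op_id: "sym_op id_blinfun"
  by (simp add: sym_op_def)

lemma sym_op_sum: "(\<And>k. k \<in> K \<Longrightarrow> sym_op (D k)) \<Longrightarrow> sym_op (sum D K)"
  by (induction K rule: infinite_finite_induct) (simp_all add: sym_op_def inner_add_left inner_add_right)

lemma sym_op_sandwich: "sym_op a \<Longrightarrow> sym_op b \<Longrightarrow> sym_op (a o\<^sub>L b o\<^sub>L a)"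
  by (simp add: sym_op_def)

lemma pos_opD: "pos_op a \<Longrightarrow> 0 \<le> inner (a x) x"
  by (simp add: pos_op_def)

lemma pos_op_sym: "pos_op a \<Longrightarrow> sym_op a"
  by (simp add: pos_op_def)

lemma pos_op_id: "pos_op id_blinfun"
  by (simp add: pos_op_def sym_op_id)

lemma pos_op_add: "pos_op a \<Longrightarrow> pos_op b \<Longrightarrow> pos_op (a + b)"
  unfolding pos_op_def by (auto intro: sym_op_add simp: inner_add_left)

lemma pos_op_scaleR: "pos_op a \<Longrightarrow> 0 \<le> r \<Longrightarrow> pos_op (r *\<^sub>R a)"
  unfolding pos_op_def by (auto intro: sym_op_scaleR)

lemma pos_op_sum: "(\<And>k. k \<in> K \<Longrightarrow> pos_op (D k)) \<Longrightarrow> pos_op (sum D K)"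
  by (induction K rule: infinite_finite_induct) (simp_all add: pos_op_add, simp_all add: pos_op_def sym_op_def)

lemma pos_op_sandwich:
  assumes "sym_op a" "pos_op b"
  shows "pos_op (a o\<^sub>L b o\<^sub>L a)"
proof -
  have "inner ((a o\<^sub>L b o\<^sub>L a) x) x = inner (b (a x)) (a x)" for x
    using sym_opD[OF assms(1)] by simp
  then show ?thesis
    using assms sym_op_sandwich[OF assms(1) pos_op_sym[OF assms(2)]] unfolding pos_op_def by simp
qed

lemma loewner_le_iff_pos_op: "loewner_le S T \<longleftrightarrow> sym_op S \<and> sym_op T \<and> pos_op (T - S)"
  unfolding loewner_le_def pos_op_def using sym_op_diff by (auto simp: inner_diff_left)

lemma loewner_le_refl: "sym_op a \<Longrightarrow> loewner_le a a"
  by (simp add: loewner_le_def)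

lemma loewner_le_trans: "loewner_le a b \<Longrightarrow> loewner_le b c \<Longrightarrow> loewner_le a c"
  unfolding loewner_le_def by (meson order_trans)

lemma loewner_le_uminus: "loewner_le a b \<Longrightarrow> loewner_le (- b) (- a)"
  unfolding loewner_le_def sym_op_def by (simp add: inner_commute)

lemma loewner_le_diff_right: "loewner_le a b \<Longrightarrow> sym_op c \<Longrightarrow> loewner_le (c - b) (c - a)"
  unfolding loewner_le_def by (simp add: sym_op_diff inner_diff_left)

lemma loewner_le_incseq:
  assumes "\<And>n. loewner_le (S n) (S (Suc n))" "\<And>n. sym_op (S n)" "m \<le> n"
  shows "loewner_le (S m) (S n)"
  using assms(3)
proof (induction n rule: dec_induct)
  case base then show ?case using loewner_le_refl assms(2) by blast
next
  case (step k) then show ?case using assms(1) loewner_le_trans by blast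
qed

lemma inner_apply_le_norm:
  fixes T :: "'a::real_inner \<Rightarrow>\<^sub>L 'a"
  shows "inner (T x) x \<le> norm T * (norm x)\<^sup>2"
proof -
  have "inner (T x) x \<le> norm (T x) * norm x" by (rule norm_cauchy_schwarz)
  also have "\<dots> \<le> norm T * norm x * norm x" by (simp add: mult_right_mono norm_blinfun)
  finally show ?thesis by (simp add: power2_eq_square mult.assoc)
qed

lemma quadratic_nonneg_discriminant:
  fixes a b c :: real
  assumes "\<And>t. 0 \<le> a + 2*t*b + t\<^sup>2*c" and "0 \<le> c"
  shows "b\<^sup>2 \<le> a*c"
proof (cases "c = 0")
  case True
  have "b = 0"
  proof (rule ccontr)
    assume "b \<noteq> 0"
    have "0 \<le> a + 2*(-(\<bar>a\<bar> + 1)/(2*b))*b + (-(\<bar>a\<bar> + 1)/(2*b))\<^sup>2*c" by (rule assms(1))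
    also have "\<dots> = a - (\<bar>a\<bar> + 1)" using \<open>b \<noteq> 0\<close> True by (simp add: field_simps)
    finally show False by linarith
  qed
  then show ?thesis using True by simp
next
  case False
  then have "c > 0" using assms by simp
  have "0 \<le> a + 2*(-b/c)*b + (-b/c)\<^sup>2*c" by (rule assms(1))
  also have "\<dots> = a - b\<^sup>2/c" using \<open>c > 0\<close> by (simp add: field_simps power2_eq_square)
  finally show ?thesis using \<open>c > 0\<close> by (simp add: divide_le_eq mult.commute)
qed

lemma pos_op_cauchy_schwarz:
  assumes "pos_op D"
  shows "(inner (D x) y)\<^sup>2 \<le> inner (D x) x * inner (D y) y"
proof (rule quadratic_nonneg_discriminant)
  have s: "inner (D u) v = inner (D v) u" for u v
    using assms unfolding pos_op_def sym_op_def by (metis inner_commute)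
  fix t
  have "0 \<le> inner (D (x + t *\<^sub>R y)) (x + t *\<^sub>R y)" using assms by (rule pos_opD)
  also have "\<dots> = inner (D x) x + 2*t*inner (D x) y + t\<^sup>2 * inner (D y) y"
    by (simp add: inner_add_left inner_add_right s[of y x] power2_eq_square algebra_simps)
  finally show "0 \<le> inner (D x) x + 2*t*inner (D x) y + t\<^sup>2 * inner (D y) y" .
qed (rule pos_opD[OF assms])

lemma pos_op_norm_apply_sq_le:
  assumes "pos_op D"
  shows "(norm (D x))\<^sup>2 \<le> norm D * inner (D x) x"
proof (cases "D x = 0")
  case False
  have "(inner (D x) (D x))\<^sup>2 \<le> inner (D x) x * inner (D (D x)) (D x)"
    by (rule pos_op_cauchy_schwarz[OF assms])
  also have "\<dots> \<le> inner (D x) x * (norm D * (norm (D x))\<^sup>2)"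
    using pos_opD[OF assms] by (intro mult_left_mono inner_apply_le_norm)
  finally have "(norm (D x))\<^sup>2 * (norm (D x))\<^sup>2 \<le> (norm D * inner (D x) x) * (norm (D x))\<^sup>2"
    by (simp add: power2_norm_eq_inner[symmetric] power2_eq_square algebra_simps)
  from mult_right_le_imp_le[OF this] show ?thesis using False by simp
qed (use pos_opD[OF assms] in simp)

lemma pos_op_norm_le:
  assumes "pos_op D" "0 \<le> c" "\<And>x. inner (D x) x \<le> c * (norm x)\<^sup>2"
  shows "norm D \<le> c"
proof (rule norm_blinfun_bound[OF assms(2)])
  fix x
  have "(inner (D x) (D x))\<^sup>2 \<le> inner (D x) x * inner (D (D x)) (D x)"
    by (rule pos_op_cauchy_schwarz[OF assms(1)])
  also have "\<dots> \<le> (c * (norm x)\<^sup>2) * (c * (norm (D x))\<^sup>2)"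
    using assms(1,3) pos_opD by (intro mult_mono') auto
  finally have "(norm (D x))\<^sup>2 * (norm (D x))\<^sup>2 \<le> (c * norm x)\<^sup>2 * (norm (D x))\<^sup>2"
    by (simp add: power2_norm_eq_inner[symmetric] power2_eq_square algebra_simps)
  from mult_right_le_imp_le[OF this] have "(norm (D x))\<^sup>2 \<le> (c * norm x)\<^sup>2"
    by (cases "D x = 0") simp_all
  then show "norm (D x) \<le> c * norm x"
    using assms(2) by (meson power2_le_imp_le mult_nonneg_nonneg norm_ge_zero)
qed

lemma pos_op_id_minus:
  assumes "sym_op W" "norm W \<le> 1"
  shows "pos_op (id_blinfun - W)"
  unfolding pos_op_def
proof (intro conjI allI)
  show "sym_op (id_blinfun - W)" by (rule sym_op_diff[OF sym_op_id assms(1)])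
  fix x
  have "inner (W x) x \<le> norm W * (norm x)\<^sup>2" by (rule inner_apply_le_norm)
  also have "\<dots> \<le> (norm x)\<^sup>2" using assms(2) by (simp add: mult_left_le_one_le)
  finally show "0 \<le> inner ((id_blinfun - W) x) x" by (simp add: inner_diff_left power2_norm_eq_inner)
qed

lemma pos_op_id_minus_scaleR:
  assumes sym: "sym_op Z" and lower: "\<And>x. m * (norm x)\<^sup>2 \<le> inner (Z x) x"
    and c: "0 \<le> c" "c * norm Z \<le> 1" "c * m \<le> 1"
  shows "pos_op (id_blinfun - c *\<^sub>R Z)" and "norm (id_blinfun - c *\<^sub>R Z) \<le> 1 - c * m"
proof -
  have form: "inner ((id_blinfun - c *\<^sub>R Z) x) x = (norm x)\<^sup>2 - c * inner (Z x) x" for x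
    by (simp add: inner_diff_left power2_norm_eq_inner)
  have "c * inner (Z x) x \<le> (norm x)\<^sup>2" for x
  proof -
    have "c * inner (Z x) x \<le> (c * norm Z) * (norm x)\<^sup>2"
      using mult_left_mono[OF inner_apply_le_norm c(1)] by (simp add: mult.assoc)
    also have "\<dots> \<le> (norm x)\<^sup>2" using c(1,2) by (simp add: mult_left_le_one_le)
    finally show ?thesis .
  qed
  then show pos: "pos_op (id_blinfun - c *\<^sub>R Z)"
    unfolding pos_op_def using form sym by (simp add: sym_op_diff sym_op_id sym_op_scaleR)
  have "c * (m * (norm x)\<^sup>2) \<le> c * inner (Z x) x" for x using lower c(1) by (rule mult_left_mono)
  then show "norm (id_blinfun - c *\<^sub>R Z) \<le> 1 - c * m"
    using form c(3) by (intro pos_op_norm_le[OF pos]) (auto simp: algebra_simps)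
qed

lemma pos_op_minus_square:
  assumes "pos_op W" "norm W \<le> 1"
  shows "pos_op (W - (W o\<^sub>L W))"
  unfolding pos_op_def
proof (intro conjI allI)
  have s: "sym_op W" using assms(1) by (rule pos_op_sym)
  moreover have "sym_op (W o\<^sub>L W)" using sym_op_sandwich[OF s sym_op_id] by simp
  ultimately show "sym_op (W - (W o\<^sub>L W))" by (rule sym_op_diff)
  fix x
  have "(norm (W x))\<^sup>2 \<le> norm W * inner (W x) x" by (rule pos_op_norm_apply_sq_le[OF assms(1)])
  also have "\<dots> \<le> inner (W x) x" using assms pos_opD[OF assms(1), of x] by (simp add: mult_left_le_one_le)
  moreover have "inner ((W o\<^sub>L W) x) x = (norm (W x))\<^sup>2"
    using sym_opD[OF s, of "W x" x] by (simp add: power2_norm_eq_inner)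
  ultimately show "0 \<le> inner ((W - (W o\<^sub>L W)) x) x" by (simp add: inner_diff_left)
qed

section \<open>Commuting operators and powers\<close>

definition op_commute :: "('a::real_normed_vector \<Rightarrow>\<^sub>L 'a) \<Rightarrow> ('a \<Rightarrow>\<^sub>L 'a) \<Rightarrow> bool" where
  "op_commute a b \<longleftrightarrow> a o\<^sub>L b = b o\<^sub>L a"

lemma op_commute_apply: "op_commute a b \<Longrightarrow> a (b x) = b (a x)"
  unfolding op_commute_def by (metis blinfun_apply_blinfun_compose)

lemma op_commute_sym: "op_commute a b \<Longrightarrow> op_commute b a"
  by (simp add: op_commute_def)

lemma op_commute_refl: "op_commute a a"
  by (simp add: op_commute_def)

lemma op_commute_id: "op_commute a id_blinfun"
  by (simp add: op_commute_def)

lemma op_commute_zero: "op_commute a 0"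
  by (simp add: op_commute_def)

lemma op_commute_add: "op_commute K a \<Longrightarrow> op_commute K b \<Longrightarrow> op_commute K (a + b)"
  by (simp add: op_commute_def blinfun_compose_linear)

lemma op_commute_diff: "op_commute K a \<Longrightarrow> op_commute K b \<Longrightarrow> op_commute K (a - b)"
  by (simp add: op_commute_def blinfun_compose_linear)

lemma op_commute_scaleR: "op_commute K a \<Longrightarrow> op_commute K (r *\<^sub>R a)"
  by (simp add: op_commute_def blinfun_compose_linear)

lemma op_commute_compose: "op_commute K a \<Longrightarrow> op_commute K b \<Longrightarrow> op_commute K (a o\<^sub>L b)"
  unfolding op_commute_def by (metis blinfun_compose_assoc)

lemma op_commute_sum: "(\<And>k. k \<in> I \<Longrightarrow> op_commute K (D k)) \<Longrightarrow> op_commute K (sum D I)"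
  by (induction I rule: infinite_finite_induct) (simp_all add: op_commute_zero op_commute_add)

lemma sym_op_compose: "sym_op a \<Longrightarrow> sym_op b \<Longrightarrow> op_commute a b \<Longrightarrow> sym_op (a o\<^sub>L b)"
  unfolding sym_op_def op_commute_def by (metis blinfun_apply_blinfun_compose)

lemma pos_op_compose_projection:
  assumes "pos_op a" "op_commute a E" "E o\<^sub>L E = E" "sym_op E"
  shows "pos_op (a o\<^sub>L E)"
proof -
  have "a o\<^sub>L E = (a o\<^sub>L E) o\<^sub>L E" using assms(3) by (simp add: blinfun_compose_assoc)
  also have "\<dots> = E o\<^sub>L a o\<^sub>L E" using assms(2) unfolding op_commute_def by simp
  finally show ?thesis using pos_op_sandwich[OF assms(4,1)] by simp
qed

primrec op_power :: "('a::real_normed_vector \<Rightarrow>\<^sub>L 'a) \<Rightarrow> nat \<Rightarrow> ('a \<Rightarrow>\<^sub>L 'a)" where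
  "op_power T 0 = id_blinfun"
| "op_power T (Suc n) = T o\<^sub>L op_power T n"

lemma op_power_add: "op_power T (m + n) = op_power T m o\<^sub>L op_power T n"
  by (induction m) (simp_all add: blinfun_compose_assoc)

lemma op_power_sandwich: "op_power T (k + m + k) = op_power T k o\<^sub>L op_power T m o\<^sub>L op_power T k"
  by (simp add: op_power_add blinfun_compose_assoc)

lemma op_commute_power: "op_commute K T \<Longrightarrow> op_commute K (op_power T n)"
  by (induction n) (simp_all add: op_commute_id op_commute_compose)

lemma sym_op_power: "sym_op T \<Longrightarrow> sym_op (op_power T n)"
  by (induction n) (simp_all add: sym_op_id sym_op_compose op_commute_power op_commute_refl)

lemma norm_op_power_le: "norm T \<le> r \<Longrightarrow> norm (op_power T n) \<le> r ^ n"
proof (induction n)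
  case 0 then show ?case by (simp add: norm_blinfun_id_le)
next
  case (Suc n)
  have "norm (op_power T (Suc n)) \<le> norm T * norm (op_power T n)"
    by (simp add: norm_blinfun_compose)
  also have "\<dots> \<le> r * r ^ n" using Suc by (simp add: mult_mono')
  finally show ?case by simp
qed

lemma nat_split_even_odd:
  fixes n :: nat
  obtains k where "n = k + 0 + k" | k where "n = k + 1 + k"
proof -
  have "n = n div 2 + 0 + n div 2 \<or> n = n div 2 + 1 + n div 2" by presburger
  then show ?thesis using that by blast
qed

lemma pos_op_power:
  assumes "pos_op T"
  shows "pos_op (op_power T n)"
proof -
  have s: "sym_op (op_power T k)" for k using sym_op_power[OF pos_op_sym[OF assms]] .
  have sandwich: "pos_op (op_power T (k + m + k))" if "pos_op (op_power T m)" for k m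
    unfolding op_power_sandwich using s that by (rule pos_op_sandwich)
  show ?thesis
  proof (cases n rule: nat_split_even_odd)
    case (1 k)
    then show ?thesis using sandwich[of 0 k] pos_op_id by simp
  next
    case (2 k)
    then show ?thesis using sandwich[of 1 k] assms by simp
  qed
qed

lemma op_power_decreasing:
  assumes "pos_op W" "norm W \<le> 1"
  shows "loewner_le (op_power W (Suc n)) (op_power W n)"
proof -
  have s: "sym_op (op_power W k)" for k using sym_op_power[OF pos_op_sym[OF assms(1)]] .
  have sandwich: "pos_op (op_power W (k + m + k) - op_power W (k + Suc m + k))"
    if "pos_op (op_power W m - op_power W (Suc m))" for k m
  proof -
    have "op_power W (k + m + k) - op_power W (k + Suc m + k)
        = op_power W k o\<^sub>L (op_power W m - op_power W (Suc m)) o\<^sub>L op_power W k"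
      by (simp only: op_power_sandwich blinfun_compose_linear)
    then show ?thesis using pos_op_sandwich[OF s that] by simp
  qed
  have "pos_op (op_power W n - op_power W (Suc n))"
  proof (cases n rule: nat_split_even_odd)
    case (1 k)
    then show ?thesis using sandwich[of 0 k] pos_op_id_minus[OF pos_op_sym[OF assms(1)] assms(2)] by simp
  next
    case (2 k)
    then show ?thesis using sandwich[of 1 k] pos_op_minus_square[OF assms] by simp
  qed
  then show ?thesis unfolding loewner_le_iff_pos_op using s by blast
qed

section \<open>Strong limits and monotone convergence\<close>

lemma Cauchy_if_dist_sq_le:
  fixes u :: "nat \<Rightarrow> 'a::real_normed_vector" and f :: "nat \<Rightarrow> real"
  assumes "Cauchy f" and "\<And>m n. (norm (u m - u n))\<^sup>2 \<le> C * \<bar>f m - f n\<bar>" and "0 < C"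
  shows "Cauchy u"
proof (rule CauchyI)
  fix e :: real
  assume "0 < e"
  then obtain N where N: "\<And>m n. m \<ge> N \<Longrightarrow> n \<ge> N \<Longrightarrow> norm (f m - f n) < e\<^sup>2 / C"
    using CauchyD[OF assms(1), of "e\<^sup>2 / C"] assms(3) by auto
  have "norm (u m - u n) < e" if "m \<ge> N" "n \<ge> N" for m n
  proof -
    have "(norm (u m - u n))\<^sup>2 \<le> C * \<bar>f m - f n\<bar>" by (rule assms(2))
    also have "\<dots> < C * (e\<^sup>2 / C)" using N[OF that] assms(3) by (intro mult_strict_left_mono) auto
    also have "\<dots> = e\<^sup>2" using assms(3) by simp
    finally show ?thesis using power_less_imp_less_base[of _ 2 e] \<open>0 < e\<close> by simp
  qed
  then show "\<exists>M. \<forall>m\<ge>M. \<forall>n\<ge>M. norm (u m - u n) < e" by blast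
qed

lemma loewner_le_norm_diff_sq_le:
  assumes "loewner_le S T"
  shows "(norm (T x - S x))\<^sup>2 \<le> norm (T - S) * (inner (T x) x - inner (S x) x)"
  using pos_op_norm_apply_sq_le[of "T - S" x] assms unfolding loewner_le_iff_pos_op
  by (simp add: inner_diff_left)

lemma incseq_loewner_strong_convergent:
  fixes S :: "nat \<Rightarrow> ('h::{real_inner,complete_space} \<Rightarrow>\<^sub>L 'h)"
  assumes sym: "\<And>n. sym_op (S n)" and inc: "\<And>n. loewner_le (S n) (S (Suc n))"
    and bound: "\<And>n. norm (S n) \<le> M"
  shows "convergent (\<lambda>n. S n x)"
proof -
  have mono: "loewner_le (S m) (S n)" if "m \<le> n" for m n
    using loewner_le_incseq[of S, OF inc sym that] .
  have "0 \<le> M" using norm_ge_zero[of "S 0"] bound[of 0] by linarith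
  define f where "f n = inner (S n x) x" for n
  have "incseq f" using mono by (auto simp: incseq_def f_def loewner_le_def)
  moreover have "f n \<le> M * (norm x)\<^sup>2" for n
  proof -
    have "f n \<le> norm (S n) * (norm x)\<^sup>2" unfolding f_def by (rule inner_apply_le_norm)
    also have "\<dots> \<le> M * (norm x)\<^sup>2" using bound[of n] by (simp add: mult_right_mono)
    finally show ?thesis .
  qed
  ultimately have "f \<longlonglongrightarrow> (SUP n. f n)"
    by (intro LIMSEQ_incseq_SUP bdd_aboveI2)
  then have "Cauchy f" by (rule LIMSEQ_imp_Cauchy)
  moreover have "(norm (S m x - S n x))\<^sup>2 \<le> (2*M + 1) * \<bar>f m - f n\<bar>" for m n
  proof -
    have *: "(norm (S n x - S m x))\<^sup>2 \<le> (2*M + 1) * \<bar>f n - f m\<bar>" if "m \<le> n" for m n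
    proof -
      have "norm (S n - S m) \<le> 2*M + 1"
        using norm_triangle_ineq4[of "S n" "S m"] bound[of n] bound[of m] by linarith
      moreover have "0 \<le> f n - f m" using mono[OF that] unfolding loewner_le_def f_def by simp
      ultimately have "norm (S n - S m) * (f n - f m) \<le> (2*M + 1) * \<bar>f n - f m\<bar>"
        using mult_right_mono by fastforce
      with loewner_le_norm_diff_sq_le[OF mono[OF that], of x] show ?thesis unfolding f_def by linarith
    qed
    have "norm (S m x - S n x) = norm (S n x - S m x)" by (rule norm_minus_commute)
    moreover have "\<bar>f m - f n\<bar> = \<bar>f n - f m\<bar>" by (rule abs_minus_commute)
    ultimately show ?thesis using *[of m n] *[of n m] nat_le_linear[of m n] by auto
  qed
  ultimately have "Cauchy (\<lambda>n. S n x)"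
    by (rule Cauchy_if_dist_sq_le) (use \<open>0 \<le> M\<close> in simp)
  then show ?thesis by (rule Cauchy_convergent)
qed

lemma strong_limit_blinfun:
  fixes S :: "nat \<Rightarrow> ('a::real_normed_vector \<Rightarrow>\<^sub>L 'b::real_normed_vector)"
  assumes conv: "\<And>x. convergent (\<lambda>n. S n x)" and bound: "\<And>n. norm (S n) \<le> M"
  obtains L :: "'a \<Rightarrow>\<^sub>L 'b" where "\<And>x. (\<lambda>n. S n x) \<longlonglongrightarrow> L x" and "norm L \<le> M"
proof -
  define l where "l x = lim (\<lambda>n. S n x)" for x
  have lim: "(\<lambda>n. S n x) \<longlonglongrightarrow> l x" for x
    using conv[of x] unfolding l_def by (simp add: convergent_LIMSEQ_iff)
  have "l (x + y) = l x + l y" for x y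
    using tendsto_add[OF lim lim] lim[of "x + y"] by (simp add: LIMSEQ_unique)
  moreover have "l (r *\<^sub>R x) = r *\<^sub>R l x" for r x
    using tendsto_scaleR[OF tendsto_const lim] lim[of "r *\<^sub>R x"] by (simp add: LIMSEQ_unique)
  moreover have bound_l: "norm (l x) \<le> norm x * M" for x
  proof (rule LIMSEQ_le_const2[OF tendsto_norm[OF lim]])
    have "norm (S n x) \<le> norm x * M" for n
      using norm_blinfun[of "S n" x] mult_right_mono[OF bound[of n] norm_ge_zero[of x]]
      by (simp add: mult.commute)
    then show "\<exists>N. \<forall>n\<ge>N. norm (S n x) \<le> norm x * M" by blast
  qed
  ultimately have "bounded_linear l" by (rule bounded_linear_intro)
  then have "blinfun_apply (Blinfun l) = l" by (rule bounded_linear_Blinfun_apply)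
  moreover have "0 \<le> M" using norm_ge_zero[of "S 0"] bound[of 0] by linarith
  ultimately show ?thesis
    using that[of "Blinfun l"] lim bound_l by (simp add: norm_blinfun_bound mult.commute)
qed

lemma sym_op_strong_limit:
  fixes S :: "nat \<Rightarrow> ('h::real_inner \<Rightarrow>\<^sub>L 'h)" and L :: "'h \<Rightarrow>\<^sub>L 'h"
  assumes lim: "\<And>x. (\<lambda>n. S n x) \<longlonglongrightarrow> L x" and sym: "\<And>n. sym_op (S n)"
  shows "sym_op L"
  unfolding sym_op_def
proof (intro allI)
  fix x y
  have "(\<lambda>n. inner (S n x) y) \<longlonglongrightarrow> inner (L x) y" by (rule tendsto_inner[OF lim tendsto_const])
  moreover have "(\<lambda>n. inner (S n x) y) \<longlonglongrightarrow> inner x (L y)"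
    using tendsto_inner[OF tendsto_const lim] sym_opD[OF sym] by simp
  ultimately show "inner (L x) y = inner x (L y)" by (rule LIMSEQ_unique)
qed

lemma op_commute_strong_limit:
  fixes S :: "nat \<Rightarrow> ('a::real_normed_vector \<Rightarrow>\<^sub>L 'a)" and K L :: "'a \<Rightarrow>\<^sub>L 'a"
  assumes lim: "\<And>x. (\<lambda>n. S n x) \<longlonglongrightarrow> L x" and comm: "\<And>n. op_commute K (S n)"
  shows "op_commute K L"
  unfolding op_commute_def
proof (rule blinfun_eqI)
  fix x
  have "(\<lambda>n. K (S n x)) \<longlonglongrightarrow> K (L x)" by (rule blinfun.tendsto[OF tendsto_const lim])
  then have "(\<lambda>n. S n (K x)) \<longlonglongrightarrow> K (L x)" using op_commute_apply[OF comm] by simp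
  then show "(K o\<^sub>L L) x = (L o\<^sub>L K) x" using lim[of "K x"] LIMSEQ_unique by simp
qed

lemma strong_limit_compose:
  fixes S T :: "nat \<Rightarrow> ('a::real_normed_vector \<Rightarrow>\<^sub>L 'a)" and L R :: "'a \<Rightarrow>\<^sub>L 'a"
  assumes lim_S: "\<And>x. (\<lambda>n. S n x) \<longlonglongrightarrow> L x" and lim_T: "\<And>x. (\<lambda>n. T n x) \<longlonglongrightarrow> R x"
    and bound: "\<And>n. norm (S n) \<le> M"
  shows "(\<lambda>n. S n (T n x)) \<longlonglongrightarrow> L (R x)"
proof -
  have "(\<lambda>n. T n x - R x) \<longlonglongrightarrow> 0" using lim_T[of x] by (rule LIM_zero)
  moreover have "norm (S n (T n x - R x)) \<le> norm (T n x - R x) * M" for n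
    using norm_blinfun[of "S n" "T n x - R x"] mult_right_mono[OF bound[of n] norm_ge_zero[of "T n x - R x"]]
    by (simp add: mult.commute)
  then have "\<forall>\<^sub>F n in sequentially. norm (S n (T n x - R x)) \<le> norm (T n x - R x) * M"
    by (simp add: always_eventually)
  ultimately have "(\<lambda>n. S n (T n x - R x)) \<longlonglongrightarrow> 0" by (rule tendsto_0_le)
  from tendsto_add[OF this lim_S[of "R x"]] show ?thesis by simp
qed

lemma loewner_le_strong_limit:
  fixes S :: "nat \<Rightarrow> ('h::real_inner \<Rightarrow>\<^sub>L 'h)" and L T :: "'h \<Rightarrow>\<^sub>L 'h"
  assumes lim: "\<And>x. (\<lambda>n. S n x) \<longlonglongrightarrow> L x" and le: "\<And>n. loewner_le (S n) T"
  shows "loewner_le L T"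
proof -
  have sym: "sym_op (S n)" and "sym_op T" and le_T: "inner (S n x) x \<le> inner (T x) x" for n x
    using le[of n] unfolding loewner_le_def by blast+
  moreover have "inner (L x) x \<le> inner (T x) x" for x
    by (rule LIMSEQ_le_const2[OF tendsto_inner[OF lim tendsto_const]]) (use le_T in blast)
  ultimately show ?thesis unfolding loewner_le_def using sym_op_strong_limit[OF lim sym] by blast
qed

lemma incseq_le_strong_limit:
  fixes S :: "nat \<Rightarrow> ('h::real_inner \<Rightarrow>\<^sub>L 'h)" and L :: "'h \<Rightarrow>\<^sub>L 'h"
  assumes lim: "\<And>x. (\<lambda>n. S n x) \<longlonglongrightarrow> L x"
    and sym: "\<And>n. sym_op (S n)" and inc: "\<And>n. loewner_le (S n) (S (Suc n))"
  shows "loewner_le (S n) L"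
proof -
  have "inner (S n x) x \<le> inner (S m x) x" if "n \<le> m" for m x
    using loewner_le_incseq[of S, OF inc sym that] unfolding loewner_le_def by blast
  then have "inner (S n x) x \<le> inner (L x) x" for x
    by (intro LIMSEQ_le_const[OF tendsto_inner[OF lim tendsto_const]]) blast
  then show ?thesis unfolding loewner_le_def using sym sym_op_strong_limit[OF lim sym] by blast
qed

theorem monotone_strong_limit:
  fixes S :: "nat \<Rightarrow> ('h::{real_inner,complete_space} \<Rightarrow>\<^sub>L 'h)"
  assumes sym: "\<And>n. sym_op (S n)" and inc: "\<And>n. loewner_le (S n) (S (Suc n))"
    and bound: "\<And>n. norm (S n) \<le> M"
  obtains L :: "'h \<Rightarrow>\<^sub>L 'h" where "\<And>x. (\<lambda>n. S n x) \<longlonglongrightarrow> L x" "norm L \<le> M" "\<And>n. loewner_le (S n) L"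
proof -
  obtain L :: "'h \<Rightarrow>\<^sub>L 'h" where lim: "\<And>x. (\<lambda>n. S n x) \<longlonglongrightarrow> L x" and "norm L \<le> M"
    using strong_limit_blinfun[OF incseq_loewner_strong_convergent[of S, OF sym inc bound] bound] by blast
  then show ?thesis using that incseq_le_strong_limit[of S, OF lim sym inc] by blast
qed

section \<open>Inverses and the Neumann series\<close>

definition op_inverse :: "('a::real_normed_vector \<Rightarrow>\<^sub>L 'a) \<Rightarrow> ('a \<Rightarrow>\<^sub>L 'a) \<Rightarrow> bool" where
  "op_inverse S X \<longleftrightarrow> S o\<^sub>L X = id_blinfun \<and> X o\<^sub>L S = id_blinfun"

lemma op_inverse_apply:
  assumes "op_inverse S X"
  shows "S (X y) = y" and "X (S y) = y"
  using assms unfolding op_inverse_def by (metis blinfun_apply_blinfun_compose blinfun_apply_id_blinfun)+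

lemma sym_op_inverse:
  assumes "sym_op S" "op_inverse S X"
  shows "sym_op X"
  unfolding sym_op_def
proof (intro allI)
  fix a b
  show "inner (X a) b = inner a (X b)"
    using sym_opD[OF assms(1), of "X a" "X b"] op_inverse_apply(1)[OF assms(2)] by simp
qed

lemma inverse_quadratic_lower_bound:
  assumes pos: "pos_op S" and inv: "op_inverse S X"
  shows "2 * inner y z - inner (S z) z \<le> inner (X y) y"
proof -
  have sym: "sym_op S" using pos by (rule pos_op_sym)
  have SX: "S (X y) = y" using inv by (rule op_inverse_apply)
  have "0 \<le> inner (S (z - X y)) (z - X y)" using pos by (rule pos_opD)
  also have "\<dots> = inner (S z) z - 2 * inner (S z) (X y) + inner (S (X y)) (X y)"
    using sym_opD[OF sym, of "X y" z] by (simp add: inner_diff_left inner_diff_right inner_commute)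
  also have "inner (S z) (X y) = inner z y" using sym_opD[OF sym, of z "X y"] SX by simp
  finally show ?thesis using SX by (simp add: inner_commute)
qed

lemma resolvent_norm_sq_le:
  assumes pos: "pos_op T" and inv: "op_inverse (id_blinfun + T) X"
  shows "(norm (X y))\<^sup>2 \<le> inner (X y) y"
proof -
  have "inner (X y) y = inner (X y) (X y) + inner (X y) (T (X y))"
    using op_inverse_apply(1)[OF inv, of y] by (metis blinfun_apply_id_blinfun inner_add_right plus_blinfun.rep_eq)
  moreover have "0 \<le> inner (X y) (T (X y))" using pos_opD[OF pos, of "X y"] by (simp add: inner_commute)
  ultimately show ?thesis by (simp add: power2_norm_eq_inner)
qed

lemma sym_op_resolvent:
  assumes "pos_op T" and "op_inverse (id_blinfun + T) X"
  shows "sym_op X"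
  using assms sym_op_inverse sym_op_add sym_op_id pos_op_sym by metis

lemma pos_op_resolvent:
  assumes "pos_op T" and "op_inverse (id_blinfun + T) X"
  shows "pos_op X"
  unfolding pos_op_def using sym_op_resolvent[OF assms] resolvent_norm_sq_le[OF assms]
  by (meson order_trans zero_le_power2)

lemma resolvent_le_id:
  assumes "pos_op T" and "op_inverse (id_blinfun + T) X"
  shows "loewner_le X id_blinfun"
  unfolding loewner_le_def
proof (intro conjI allI sym_op_resolvent[OF assms] sym_op_id)
  fix y
  have sq: "(norm (X y))\<^sup>2 \<le> inner (X y) y" by (rule resolvent_norm_sq_le[OF assms])
  have cs: "inner (X y) y \<le> norm (X y) * norm y" by (rule norm_cauchy_schwarz)
  have "norm (X y) \<le> norm y"
  proof (cases "X y = 0")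
    case False
    have "norm (X y) * norm (X y) \<le> norm y * norm (X y)"
      using sq cs by (simp add: power2_eq_square mult.commute)
    then show ?thesis by (rule mult_right_le_imp_le) (use False in simp)
  qed simp
  then have "inner (X y) y \<le> norm y * norm y" using cs by (simp add: mult_right_mono order_trans)
  then show "inner (X y) y \<le> inner (id_blinfun y) y"
    by (simp add: power2_norm_eq_inner[symmetric] power2_eq_square)
qed

lemma id_minus_resolvent_le:
  assumes pos: "pos_op T" and inv: "op_inverse (id_blinfun + T) X"
  shows "loewner_le (id_blinfun - X) T"
  unfolding loewner_le_def
proof (intro conjI allI sym_op_diff sym_op_id sym_op_resolvent[OF assms] pos_op_sym[OF pos])
  fix y
  have "2 * inner y y - inner ((id_blinfun + T) y) y \<le> inner (X y) y"
    using pos_op_add[OF pos_op_id pos] inv by (rule inverse_quadratic_lower_bound)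
  then show "inner ((id_blinfun - X) y) y \<le> inner (T y) y"
    by (simp add: inner_diff_left inner_add_left)
qed

lemma resolvent_antimono:
  assumes pos1: "pos_op T1" and pos2: "pos_op T2" and le: "loewner_le T1 T2"
    and inv1: "op_inverse (id_blinfun + T1) X1" and inv2: "op_inverse (id_blinfun + T2) X2"
  shows "loewner_le X2 X1"
  unfolding loewner_le_def
proof (intro conjI allI sym_op_resolvent[OF pos1 inv1] sym_op_resolvent[OF pos2 inv2])
  fix y
  have "2 * inner y (X2 y) - inner ((id_blinfun + T1) (X2 y)) (X2 y) \<le> inner (X1 y) y"
    using pos_op_add[OF pos_op_id pos1] inv1 by (rule inverse_quadratic_lower_bound)
  moreover have "inner ((id_blinfun + T1) (X2 y)) (X2 y) \<le> inner ((id_blinfun + T2) (X2 y)) (X2 y)"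
    using le unfolding loewner_le_def by (simp add: inner_add_left)
  moreover have "(id_blinfun + T2) (X2 y) = y" using inv2 by (rule op_inverse_apply)
  ultimately show "inner (X2 y) y \<le> inner (X1 y) y" by (simp add: inner_commute)
qed

lemma geometric_partial_sum_le:
  fixes r :: real
  assumes "0 \<le> r" "r < 1"
  shows "(\<Sum>n<k. r ^ n) \<le> 1 / (1 - r)"
proof -
  have "(\<Sum>n<k. r ^ n) = (1 - r ^ k) / (1 - r)" using assms sum_gp_strict[of r k] by simp
  also have "\<dots> \<le> 1 / (1 - r)" using assms by (intro divide_right_mono) auto
  finally show ?thesis .
qed

lemma op_power_strong_tendsto_zero:
  assumes "norm W < 1"
  shows "(\<lambda>k. op_power W k x) \<longlonglongrightarrow> 0"
proof (rule Lim_null_comparison)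
  have "norm (op_power W k x) \<le> norm W ^ k * norm x" for k
    by (rule order_trans[OF norm_blinfun mult_right_mono[OF norm_op_power_le[OF order_refl] norm_ge_zero]])
  then show "\<forall>\<^sub>F k in sequentially. norm (op_power W k x) \<le> norm W ^ k * norm x"
    by (simp add: always_eventually)
  show "(\<lambda>k. norm W ^ k * norm x) \<longlonglongrightarrow> 0"
    using assms by (intro tendsto_mult_left_zero LIMSEQ_power_zero) auto
qed

lemma id_minus_compose_geometric_sum:
  "(id_blinfun - W) o\<^sub>L (\<Sum>n<k. op_power W n) = id_blinfun - op_power W k"
  "(\<Sum>n<k. op_power W n) o\<^sub>L (id_blinfun - W) = id_blinfun - op_power W k"
proof -
  show left: "(id_blinfun - W) o\<^sub>L (\<Sum>n<k. op_power W n) = id_blinfun - op_power W k" for k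
  proof (induction k)
    case (Suc k)
    have "(id_blinfun - W) o\<^sub>L (\<Sum>n<Suc k. op_power W n)
        = ((id_blinfun - W) o\<^sub>L (\<Sum>n<k. op_power W n)) + ((id_blinfun - W) o\<^sub>L op_power W k)"
      by (simp add: blinfun_compose.add_right)
    also have "\<dots> = id_blinfun - op_power W (Suc k)" using Suc by (simp add: blinfun_compose.diff_left)
    finally show ?case .
  qed simp
  have "op_commute W (\<Sum>n<k. op_power W n)" by (intro op_commute_sum op_commute_power op_commute_refl)
  then show "(\<Sum>n<k. op_power W n) o\<^sub>L (id_blinfun - W) = id_blinfun - op_power W k"
    using left[of k] unfolding op_commute_def by (simp add: blinfun_compose_linear)
qed

lemma op_inverse_strong_limit:
  fixes S N :: "'a::real_normed_vector \<Rightarrow>\<^sub>L 'a" and P Q :: "nat \<Rightarrow> ('a \<Rightarrow>\<^sub>L 'a)"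
  assumes lim: "\<And>x. (\<lambda>k. P k x) \<longlonglongrightarrow> N x" and rest: "\<And>x. (\<lambda>k. Q k x) \<longlonglongrightarrow> 0"
    and left: "\<And>k. S o\<^sub>L P k = id_blinfun - Q k" and right: "\<And>k. P k o\<^sub>L S = id_blinfun - Q k"
  shows "op_inverse S N"
proof -
  have to_x: "(\<lambda>k. x - Q k x) \<longlonglongrightarrow> x" for x
    using tendsto_diff[OF tendsto_const rest, of x x] by simp
  have "S (N x) = x" for x
  proof -
    have "(\<lambda>k. x - Q k x) \<longlonglongrightarrow> S (N x)"
      using blinfun.tendsto[OF tendsto_const lim, of S x] arg_cong[OF left, of "\<lambda>T. T x"] by simp
    from LIMSEQ_unique[OF this to_x] show ?thesis .
  qed
  moreover have "N (S x) = x" for x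
  proof -
    have "(\<lambda>k. x - Q k x) \<longlonglongrightarrow> N (S x)" using lim[of "S x"] arg_cong[OF right, of "\<lambda>T. T x"] by simp
    from LIMSEQ_unique[OF this to_x] show ?thesis .
  qed
  ultimately show ?thesis unfolding op_inverse_def by (simp add: blinfun_eqI)
qed

text \<open>For positive \<open>W\<close> the partial sums of the Neumann series increase, so the monotone
  convergence theorem provides the sum as a strong limit. This avoids norm convergence in the
  operator space, whose completeness is only available for spaces of class \<open>banach\<close>.\<close>

lemma neumann_series:
  fixes W :: "'h::{real_inner,complete_space} \<Rightarrow>\<^sub>L 'h"
  assumes pos: "pos_op W" and norm: "norm W < 1"
  obtains N where "op_inverse (id_blinfun - W) N"
    and "\<And>x. (\<lambda>k. (\<Sum>n<k. op_power W n) x) \<longlonglongrightarrow> N x"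
proof -
  define P where "P k = (\<Sum>n<k. op_power W n)" for k
  have "sym_op (P k)" for k
    unfolding P_def by (intro sym_op_sum sym_op_power pos_op_sym[OF pos])
  moreover have "loewner_le (P k) (P (Suc k))" for k
    using calculation pos_op_power[OF pos, of k] unfolding P_def loewner_le_iff_pos_op
    by (simp add: sym_op_add pos_op_sym)
  moreover have "norm (P k) \<le> 1 / (1 - norm W)" for k
  proof -
    have "norm (P k) \<le> (\<Sum>n<k. norm (op_power W n))" unfolding P_def by (rule norm_sum)
    also have "\<dots> \<le> (\<Sum>n<k. norm W ^ n)" by (intro sum_mono norm_op_power_le) simp
    also have "\<dots> \<le> 1 / (1 - norm W)" using norm by (intro geometric_partial_sum_le) auto
    finally show ?thesis .
  qed
  ultimately obtain N :: "'h \<Rightarrow>\<^sub>L 'h" where lim: "\<And>x. (\<lambda>k. P k x) \<longlonglongrightarrow> N x"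
    by (rule monotone_strong_limit) blast
  have "op_inverse (id_blinfun - W) N"
    using lim op_power_strong_tendsto_zero[OF norm] id_minus_compose_geometric_sum
    unfolding P_def by (rule op_inverse_strong_limit)
  then show ?thesis using that lim unfolding P_def by blast
qed

section \<open>Closure properties of JW-algebras\<close>

locale JW =
  fixes J :: "'h::{real_inner,complete_space} \<Rightarrow>\<^sub>L 'h" and A :: "('h \<Rightarrow>\<^sub>L 'h) set"
  assumes JW_algebra: "JW_algebra J A"
begin

lemma self_adj_mem: "a \<in> A \<Longrightarrow> self_adj J a"
  using JW_algebra unfolding JW_algebra_def by blast

lemma sym_op_mem: "a \<in> A \<Longrightarrow> sym_op a"
  using self_adj_mem unfolding self_adj_def sym_op_def by blast

lemma id_closed: "id_blinfun \<in> A"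
  using JW_algebra unfolding JW_algebra_def by blast

lemma zero_closed: "0 \<in> A"
  using JW_algebra unfolding JW_algebra_def by blast

lemma add_closed: "a \<in> A \<Longrightarrow> b \<in> A \<Longrightarrow> a + b \<in> A"
  using JW_algebra unfolding JW_algebra_def by blast

lemma scaleR_closed: "a \<in> A \<Longrightarrow> c *\<^sub>R a \<in> A"
  using JW_algebra unfolding JW_algebra_def by blast

lemma diff_closed: "a \<in> A \<Longrightarrow> b \<in> A \<Longrightarrow> a - b \<in> A"
  using add_closed[of a "(-1) *\<^sub>R b"] scaleR_closed[of b "-1"] by simp

lemma sum_closed: "(\<And>k. k \<in> K \<Longrightarrow> D k \<in> A) \<Longrightarrow> sum D K \<in> A"
  by (induction K rule: infinite_finite_induct) (simp_all add: zero_closed add_closed)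

lemma square_closed:
  assumes "a \<in> A"
  shows "a o\<^sub>L a \<in> A"
proof -
  have "jordan_prod a id_blinfun = a o\<^sub>L a"
    unfolding jordan_prod_def by (rule blinfun_eqI) (simp add: scaleR_2[symmetric])
  then show ?thesis
    using JW_algebra assms id_closed unfolding JW_algebra_def by metis
qed

lemma compose_closed:
  assumes "a \<in> A" "b \<in> A" "op_commute a b"
  shows "a o\<^sub>L b \<in> A"
proof -
  have "a o\<^sub>L b = (1/2) *\<^sub>R (((a + b) o\<^sub>L (a + b)) - (a o\<^sub>L a) - (b o\<^sub>L b))"
  proof (rule blinfun_eqI)
    fix x
    have "((a + b) o\<^sub>L (a + b)) x - (a o\<^sub>L a) x - (b o\<^sub>L b) x = 2 *\<^sub>R a (b x)"
      using op_commute_apply[OF assms(3), of x] by (simp add: scaleR_2)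
    then show "(a o\<^sub>L b) x = ((1/2) *\<^sub>R (((a + b) o\<^sub>L (a + b)) - (a o\<^sub>L a) - (b o\<^sub>L b))) x"
      by (simp only: minus_blinfun.rep_eq scaleR_blinfun.rep_eq) simp
  qed
  also have "\<dots> \<in> A" using assms by (intro scaleR_closed diff_closed square_closed add_closed)
  finally show ?thesis .
qed

lemma power_closed: "a \<in> A \<Longrightarrow> op_power a n \<in> A"
  by (induction n) (simp_all add: id_closed compose_closed op_commute_power op_commute_refl)

lemma strong_limit_closed:
  fixes T :: "'h \<Rightarrow>\<^sub>L 'h"
  assumes mem: "\<And>n. S n \<in> A" and lim: "\<And>x. (\<lambda>n. S n x) \<longlonglongrightarrow> T x"
  shows "T \<in> A"
proof -
  have "op_commute J (S n)" for n
    using self_adj_mem[OF mem, of n] unfolding self_adj_def BH_def op_commute_def by simp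
  then have "T \<in> BH J"
    using op_commute_strong_limit[OF lim] unfolding op_commute_def BH_def by simp
  moreover have "\<exists>a\<in>A. \<forall>(x, y)\<in>F. \<bar>inner ((T - a) x) y\<bar> < e" if "finite F" "e > 0" for F e
  proof -
    have "\<forall>\<^sub>F n in sequentially. \<bar>inner ((T - S n) (fst p)) (snd p)\<bar> < e" for p
    proof -
      have "(\<lambda>n. inner ((T - S n) (fst p)) (snd p)) \<longlonglongrightarrow> 0"
        using tendsto_inner[OF tendsto_diff[OF tendsto_const lim] tendsto_const,
            of "T (fst p)" "fst p" "snd p"] by simp
      from order_tendstoD(2)[OF tendsto_rabs_zero[OF this] \<open>e > 0\<close>] show ?thesis .
    qed
    then have "\<forall>\<^sub>F n in sequentially. \<forall>p\<in>F. \<bar>inner ((T - S n) (fst p)) (snd p)\<bar> < e"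
      by (intro eventually_ball_finite \<open>finite F\<close>) blast
    then obtain N where "\<forall>n\<ge>N. \<forall>p\<in>F. \<bar>inner ((T - S n) (fst p)) (snd p)\<bar> < e"
      unfolding eventually_sequentially by blast
    then have "\<forall>p\<in>F. \<bar>inner ((T - S N) (fst p)) (snd p)\<bar> < e" by blast
    then show ?thesis unfolding case_prod_beta using mem[of N] by blast
  qed
  ultimately show ?thesis
    using JW_algebra unfolding JW_algebra_def wot_closed_def by blast
qed

lemma resolvent_closed:
  assumes mem: "T \<in> A" and pos: "pos_op T"
  obtains X where "X \<in> A" "op_inverse (id_blinfun + T) X"
proof -
  define c where "c = 1 / (1 + norm T)"
  have "0 < 1 + norm T" using norm_ge_zero[of T] by linarith
  then have c: "0 < c" "c \<le> 1" "c * (1 + norm T) = 1" unfolding c_def by (simp_all add: field_simps)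
  have "norm (id_blinfun + T) \<le> 1 + norm T"
    using norm_triangle_ineq[of id_blinfun T] norm_blinfun_id_le[where 'a = 'h] by linarith
  from mult_left_mono[OF this less_imp_le[OF c(1)]] have "c * norm (id_blinfun + T) \<le> 1" using c(3) by simp
  moreover have "1 * (norm x)\<^sup>2 \<le> inner ((id_blinfun + T) x) x" for x
    using pos_opD[OF pos, of x] by (simp add: inner_add_left power2_norm_eq_inner)
  ultimately have W: "pos_op (id_blinfun - c *\<^sub>R (id_blinfun + T))"
    "norm (id_blinfun - c *\<^sub>R (id_blinfun + T)) \<le> 1 - c * 1"
    using pos_op_id_minus_scaleR[of "id_blinfun + T" 1 c] c sym_op_add[OF sym_op_id pos_op_sym[OF pos]]
    by simp_all
  moreover have "norm (id_blinfun - c *\<^sub>R (id_blinfun + T)) < 1" using W(2) c(1) by simp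
  ultimately obtain N where "op_inverse (id_blinfun - (id_blinfun - c *\<^sub>R (id_blinfun + T))) N"
    and lim: "\<And>x. (\<lambda>k. (\<Sum>n<k. op_power (id_blinfun - c *\<^sub>R (id_blinfun + T)) n) x) \<longlonglongrightarrow> N x"
    using neumann_series by blast
  then have inv: "op_inverse (c *\<^sub>R (id_blinfun + T)) N" by simp
  have "N \<in> A"
    using lim by (rule strong_limit_closed[rotated]) (intro sum_closed power_closed diff_closed scaleR_closed
        add_closed id_closed mem)
  moreover have "op_inverse (id_blinfun + T) (c *\<^sub>R N)"
    using inv unfolding op_inverse_def by (simp add: blinfun_compose.scaleR_left blinfun_compose.scaleR_right)
  ultimately show ?thesis using that scaleR_closed by blast
qed

end

section \<open>Square roots and kernel projections\<close>

inductive nonneg_poly :: "('a::real_normed_vector \<Rightarrow>\<^sub>L 'a) \<Rightarrow> ('a \<Rightarrow>\<^sub>L 'a) \<Rightarrow> bool" for C where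
  nonneg_poly_power: "nonneg_poly C (op_power C k)"
| nonneg_poly_add: "nonneg_poly C a \<Longrightarrow> nonneg_poly C b \<Longrightarrow> nonneg_poly C (a + b)"
| nonneg_poly_scaleR: "0 \<le> r \<Longrightarrow> nonneg_poly C a \<Longrightarrow> nonneg_poly C (r *\<^sub>R a)"

lemma nonneg_poly_zero: "nonneg_poly C 0"
  using nonneg_poly_scaleR[of 0 C "op_power C 0"] nonneg_poly_power[of C 0] by simp

lemma nonneg_poly_self: "nonneg_poly C C"
  using nonneg_poly_power[of C 1] by simp

lemma nonneg_poly_compose_power: "nonneg_poly C b \<Longrightarrow> nonneg_poly C (op_power C k o\<^sub>L b)"
proof (induction rule: nonneg_poly.induct)
  case (nonneg_poly_power j)
  then show ?case using nonneg_poly.nonneg_poly_power[of C "k + j"] by (simp add: op_power_add)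
qed (simp_all add: blinfun_compose_linear nonneg_poly.intros)

lemma nonneg_poly_compose: "nonneg_poly C a \<Longrightarrow> nonneg_poly C b \<Longrightarrow> nonneg_poly C (a o\<^sub>L b)"
  by (induction rule: nonneg_poly.induct)
    (simp_all add: nonneg_poly_compose_power blinfun_compose_linear nonneg_poly.intros)

lemma pos_op_nonneg_poly:
  assumes "pos_op C"
  shows "nonneg_poly C a \<Longrightarrow> pos_op a"
  by (induction rule: nonneg_poly.induct) (simp_all add: assms pos_op_power pos_op_add pos_op_scaleR)

text \<open>The iteration \<open>B \<mapsto> (C + B\<^sup>2) / 2\<close> increases to a solution of \<open>(1 - B)\<^sup>2 = 1 - C\<close>;
  every iterate and every increment is a polynomial in \<open>C\<close> with nonnegative coefficients.\<close>

primrec sqrt_iter :: "('a::real_normed_vector \<Rightarrow>\<^sub>L 'a) \<Rightarrow> nat \<Rightarrow> ('a \<Rightarrow>\<^sub>L 'a)" where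
  "sqrt_iter C 0 = 0"
| "sqrt_iter C (Suc n) = (1/2) *\<^sub>R (C + (sqrt_iter C n o\<^sub>L sqrt_iter C n))"

lemma op_commute_sqrt_iter: "op_commute K C \<Longrightarrow> op_commute K (sqrt_iter C n)"
  by (induction n) (simp_all add: op_commute_zero op_commute_scaleR op_commute_add op_commute_compose)

lemma sqrt_iter_nonneg_poly:
  "nonneg_poly C (sqrt_iter C n) \<and> nonneg_poly C (sqrt_iter C (Suc n) - sqrt_iter C n)"
proof (induction n)
  case 0
  show ?case using nonneg_poly_scaleR[of "1/2" C C] by (simp add: nonneg_poly_zero nonneg_poly_self)
next
  case (Suc n)
  let ?u = "sqrt_iter C (Suc n)" and ?v = "sqrt_iter C n"
  have "op_commute ?u ?v"
    by (rule op_commute_sqrt_iter[OF op_commute_sym[OF op_commute_sqrt_iter[OF op_commute_refl]]])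
  then have "sqrt_iter C (Suc (Suc n)) - ?u = (1/2) *\<^sub>R ((?u - ?v) o\<^sub>L (?u + ?v))"
    unfolding op_commute_def by (simp add: blinfun_compose_linear algebra_simps)
  moreover have "nonneg_poly C ?u" using Suc nonneg_poly_add by fastforce
  moreover have "nonneg_poly C (?u + ?v)" using calculation(2) Suc by (simp add: nonneg_poly_add)
  ultimately show ?case
    using Suc by (simp add: nonneg_poly_scaleR nonneg_poly_compose del: sqrt_iter.simps)
qed

lemma norm_sqrt_iter_le:
  assumes "norm C \<le> 1"
  shows "norm (sqrt_iter C n) \<le> 1"
proof (induction n)
  case (Suc n)
  have "norm (sqrt_iter C n o\<^sub>L sqrt_iter C n) \<le> norm (sqrt_iter C n) * norm (sqrt_iter C n)"
    by (rule norm_blinfun_compose)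
  also have "\<dots> \<le> 1" using Suc by (intro mult_le_one) simp_all
  finally have "norm (C + (sqrt_iter C n o\<^sub>L sqrt_iter C n)) \<le> 2"
    using norm_triangle_ineq[of C "sqrt_iter C n o\<^sub>L sqrt_iter C n"] assms by linarith
  moreover have "norm (sqrt_iter C (Suc n)) = norm (C + (sqrt_iter C n o\<^sub>L sqrt_iter C n)) / 2"
    by simp
  ultimately show ?case by linarith
qed simp

lemma sqrt_iter_limit:
  fixes C :: "'h::{real_inner,complete_space} \<Rightarrow>\<^sub>L 'h"
  assumes pos: "pos_op C" and norm: "norm C \<le> 1"
  obtains B :: "'h \<Rightarrow>\<^sub>L 'h" where "\<And>x. (\<lambda>n. sqrt_iter C n x) \<longlonglongrightarrow> B x" "norm B \<le> 1" "sym_op B"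
    "B o\<^sub>L B = 2 *\<^sub>R B - C"
proof -
  have sym: "sym_op (sqrt_iter C n)" for n
    by (rule pos_op_sym[OF pos_op_nonneg_poly[OF pos sqrt_iter_nonneg_poly[THEN conjunct1]]])
  have inc: "loewner_le (sqrt_iter C n) (sqrt_iter C (Suc n))" for n
    unfolding loewner_le_iff_pos_op
    by (intro conjI sym pos_op_nonneg_poly[OF pos sqrt_iter_nonneg_poly[THEN conjunct2]])
  obtain B :: "'h \<Rightarrow>\<^sub>L 'h" where lim: "\<And>x. (\<lambda>n. sqrt_iter C n x) \<longlonglongrightarrow> B x"
    and norm_B: "norm B \<le> 1"
    by (rule monotone_strong_limit[of "sqrt_iter C", OF sym inc norm_sqrt_iter_le[OF norm]]) blast
  have "sym_op B" using lim sym by (rule sym_op_strong_limit)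
  moreover have "B o\<^sub>L B = 2 *\<^sub>R B - C"
  proof (rule blinfun_eqI)
    fix x
    have "(\<lambda>n. (1/2) *\<^sub>R (C x + sqrt_iter C n (sqrt_iter C n x))) \<longlonglongrightarrow> (1/2) *\<^sub>R (C x + B (B x))"
      by (intro tendsto_scaleR tendsto_add tendsto_const strong_limit_compose[OF lim lim norm_sqrt_iter_le[OF norm]])
    then have "(\<lambda>n. sqrt_iter C (Suc n) x) \<longlonglongrightarrow> (1/2) *\<^sub>R (C x + B (B x))" by simp
    moreover have "(\<lambda>n. sqrt_iter C (Suc n) x) \<longlonglongrightarrow> B x" using lim[of x] by (rule LIMSEQ_Suc)
    ultimately have "B x = (1/2) *\<^sub>R (C x + B (B x))" using LIMSEQ_unique by blast
    from arg_cong[OF this, of "scaleR 2"] have "2 *\<^sub>R B x = C x + B (B x)"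
      by (simp only: scaleR_scaleR) simp
    then show "(B o\<^sub>L B) x = (2 *\<^sub>R B - C) x" by (simp add: algebra_simps)
  qed
  ultimately show ?thesis by (rule that[OF lim norm_B])
qed

lemma op_power_strong_limit:
  fixes G :: "'h::{real_inner,complete_space} \<Rightarrow>\<^sub>L 'h"
  assumes pos: "pos_op G" and norm: "norm G \<le> 1"
  obtains F :: "'h \<Rightarrow>\<^sub>L 'h" where "\<And>x. (\<lambda>n. op_power G n x) \<longlonglongrightarrow> F x"
proof -
  have "sym_op (- op_power G n)" for n
    using sym_op_scaleR[OF sym_op_power[OF pos_op_sym[OF pos]], of "-1"] by simp
  moreover have "loewner_le (- op_power G n) (- op_power G (Suc n))" for n
    by (rule loewner_le_uminus[OF op_power_decreasing[OF pos norm]])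
  moreover have "norm (- op_power G n) \<le> 1" for n using norm_op_power_le[OF norm, of n] by simp
  ultimately obtain L :: "'h \<Rightarrow>\<^sub>L 'h" where "\<And>x. (\<lambda>n. (- op_power G n) x) \<longlonglongrightarrow> L x"
    by (rule monotone_strong_limit) blast
  then have "(\<lambda>n. - ((- op_power G n) x)) \<longlonglongrightarrow> - L x" for x by (rule tendsto_minus)
  then have "(\<lambda>n. op_power G n x) \<longlonglongrightarrow> (- L) x" for x by simp
  then show ?thesis by (rule that)
qed

lemma op_power_strong_limit_fixed:
  fixes G F :: "'a::real_normed_vector \<Rightarrow>\<^sub>L 'a"
  assumes lim: "\<And>x. (\<lambda>n. op_power G n x) \<longlonglongrightarrow> F x"
  shows "G o\<^sub>L F = F" and "F o\<^sub>L F = F" and "G u = u \<Longrightarrow> F u = u"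
proof -
  have fixed: "F u = u" if "G u = u" for u
  proof -
    have "op_power G n u = u" for n using that by (induction n) simp_all
    then show ?thesis using lim[of u] by (simp add: LIMSEQ_const_iff)
  qed
  have "G (F x) = F x" for x
  proof -
    have "(\<lambda>n. G (op_power G n x)) \<longlonglongrightarrow> G (F x)" by (rule blinfun.tendsto[OF tendsto_const lim])
    moreover have "(\<lambda>n. G (op_power G n x)) \<longlonglongrightarrow> F x" using LIMSEQ_Suc[OF lim[of x]] by simp
    ultimately show ?thesis by (rule LIMSEQ_unique)
  qed
  then show "G o\<^sub>L F = F" and "F o\<^sub>L F = F" by (simp_all add: blinfun_eqI fixed)
  show "G u = u \<Longrightarrow> F u = u" by (rule fixed)
qed

lemma sign_split_kernel_projection:
  assumes P_pos: "pos_op P" and P_sq: "P o\<^sub>L P = Y o\<^sub>L Y" and YP: "op_commute Y P"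
    and F_sym: "sym_op F" and F_idem: "F o\<^sub>L F = F" and VF: "(P - Y) o\<^sub>L F = 0"
    and F_ker: "\<And>u. (P - Y) u = 0 \<Longrightarrow> F u = u" and PF: "op_commute P F" and YF: "op_commute Y F"
  shows "F y = 0 \<Longrightarrow> inner (Y y) y \<le> 0" and "pos_op (Y o\<^sub>L F)"
proof -
  assume "F y = 0"
  have "(P - Y) (P y + Y y) = 0"
    using arg_cong[OF P_sq, of "\<lambda>T. T y"] op_commute_apply[OF YP, of y] by simp
  then have "F (P y + Y y) = P y + Y y" by (rule F_ker)
  then have "P y + Y y = 0"
    using \<open>F y = 0\<close> op_commute_apply[OF PF, of y] op_commute_apply[OF YF, of y] by simp
  then have "Y y = - P y" by (simp add: eq_neg_iff_add_eq_0 add.commute)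
  then show "inner (Y y) y \<le> 0" using pos_opD[OF P_pos, of y] by simp
next
  have "Y o\<^sub>L F = P o\<^sub>L F" using VF by (simp add: blinfun_compose_linear)
  then show "pos_op (Y o\<^sub>L F)" using pos_op_compose_projection[OF P_pos PF F_idem F_sym] by simp
qed

context JW
begin

lemma nonneg_poly_closed:
  assumes "C \<in> A"
  shows "nonneg_poly C a \<Longrightarrow> a \<in> A"
  by (induction rule: nonneg_poly.induct) (simp_all add: assms power_closed add_closed scaleR_closed)

lemma sqrt_closed:
  assumes mem: "Z \<in> A" and pos: "pos_op Z"
  obtains P :: "'h \<Rightarrow>\<^sub>L 'h" where "P \<in> A" "pos_op P" "P o\<^sub>L P = Z" "\<And>K. op_commute K Z \<Longrightarrow> op_commute K P"
proof -
  define c where "c = 1 / (norm Z + 1)"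
  have "0 < norm Z + 1" using norm_ge_zero[of Z] by linarith
  then have c: "0 < c" "c * norm Z \<le> 1" unfolding c_def by (simp_all add: field_simps)
  define C where "C = id_blinfun - c *\<^sub>R Z"
  have C_mem: "C \<in> A" unfolding C_def by (intro diff_closed id_closed scaleR_closed mem)
  have "pos_op C" "norm C \<le> 1"
    using pos_op_id_minus_scaleR[of Z 0 c] pos_op_sym[OF pos] pos_opD[OF pos] c unfolding C_def by simp_all
  then obtain B :: "'h \<Rightarrow>\<^sub>L 'h" where lim: "\<And>x. (\<lambda>n. sqrt_iter C n x) \<longlonglongrightarrow> B x"
    and "norm B \<le> 1" "sym_op B" and B_square: "B o\<^sub>L B = 2 *\<^sub>R B - C"
    using sqrt_iter_limit by blast
  have B_mem: "B \<in> A"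
    using lim by (rule strong_limit_closed[rotated]) (rule nonneg_poly_closed[OF C_mem sqrt_iter_nonneg_poly[THEN conjunct1]])
  define P where "P = (1 / sqrt c) *\<^sub>R (id_blinfun - B)"
  show ?thesis
  proof (rule that)
    show "P \<in> A" unfolding P_def by (intro scaleR_closed diff_closed id_closed B_mem)
    show "pos_op P"
      unfolding P_def using \<open>sym_op B\<close> \<open>norm B \<le> 1\<close> c by (intro pos_op_scaleR pos_op_id_minus) auto
    have "B (B x) = 2 *\<^sub>R B x - C x" for x using arg_cong[OF B_square, of "\<lambda>T. T x"] by simp
    then have "(id_blinfun - B) o\<^sub>L (id_blinfun - B) = c *\<^sub>R Z"
      unfolding C_def by (intro blinfun_eqI) (simp add: scaleR_2 algebra_simps)
    then show "P o\<^sub>L P = Z"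
      unfolding P_def using c by (simp add: blinfun_compose.scaleR_left blinfun_compose.scaleR_right)
    show "op_commute K P" if "op_commute K Z" for K
    proof -
      have "op_commute K C" unfolding C_def by (intro op_commute_diff op_commute_id op_commute_scaleR that)
      then have "op_commute K B" using op_commute_strong_limit[OF lim] op_commute_sqrt_iter by blast
      then show ?thesis unfolding P_def by (intro op_commute_scaleR op_commute_diff op_commute_id)
    qed
  qed
qed

lemma kernel_projection_closed:
  assumes mem: "V \<in> A"
  obtains F :: "'h \<Rightarrow>\<^sub>L 'h" where "F \<in> A" "F o\<^sub>L F = F" "V o\<^sub>L F = 0" "\<And>u. V u = 0 \<Longrightarrow> F u = u"
    "\<And>K. op_commute K V \<Longrightarrow> op_commute K F"
proof -
  define c where "c = 1 / ((norm V)\<^sup>2 + 1)"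
  have sym: "sym_op V" using mem by (rule sym_op_mem)
  have VV: "pos_op (V o\<^sub>L V)" using pos_op_sandwich[OF sym pos_op_id] by simp
  have "norm (V o\<^sub>L V) \<le> (norm V)\<^sup>2" by (simp add: norm_blinfun_compose power2_eq_square)
  moreover have "0 < (norm V)\<^sup>2 + 1" using zero_le_power2[of "norm V"] by linarith
  ultimately have c: "0 < c" "c * norm (V o\<^sub>L V) \<le> 1"
    unfolding c_def by (simp_all add: field_simps)
  define G where "G = id_blinfun - c *\<^sub>R (V o\<^sub>L V)"
  have G_mem: "G \<in> A" unfolding G_def by (intro diff_closed id_closed scaleR_closed square_closed mem)
  have lower: "0 * (norm x)\<^sup>2 \<le> inner ((V o\<^sub>L V) x) x" for x using pos_opD[OF VV, of x] by simp
  have G: "pos_op G" "norm G \<le> 1"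
    using pos_op_id_minus_scaleR[OF pos_op_sym[OF VV] lower less_imp_le[OF c(1)] c(2)]
    unfolding G_def by simp_all
  then obtain F :: "'h \<Rightarrow>\<^sub>L 'h" where lim: "\<And>x. (\<lambda>n. op_power G n x) \<longlonglongrightarrow> F x"
    using op_power_strong_limit by blast
  note fixed = op_power_strong_limit_fixed[OF lim]
  show ?thesis
  proof (rule that)
    show "F \<in> A" using lim by (rule strong_limit_closed[rotated]) (rule power_closed[OF G_mem])
    show "F o\<^sub>L F = F" by (rule fixed(2))
    show "F u = u" if "V u = 0" for u using that by (intro fixed(3)) (simp add: G_def)
    show "V o\<^sub>L F = 0"
    proof (rule blinfun_eqI)
      fix x
      have "G (F x) = F x" using fixed(1) by (metis blinfun_apply_blinfun_compose)
      then have "V (V (F x)) = 0" using c unfolding G_def by simp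
      then have "inner (V (F x)) (V (F x)) = 0" using sym_opD[OF sym, of "V (F x)" "F x"] by simp
      then show "(V o\<^sub>L F) x = blinfun_apply 0 x" by simp
    qed
    show "op_commute K F" if "op_commute K V" for K
    proof -
      have "op_commute K G"
        unfolding G_def by (intro op_commute_diff op_commute_id op_commute_scaleR op_commute_compose that)
      then show ?thesis using op_commute_strong_limit[OF lim] op_commute_power by blast
    qed
  qed
qed

text \<open>The spectral projection of \<open>X\<close> for \<open>]-\<infinity>, \<delta>]\<close>: with \<open>Y = X - \<delta>\<close> and \<open>P = |Y|\<close>, it is
  the complement of the projection \<open>F\<close> onto the kernel of \<open>P - Y = 2 Y\<^sup>-\<close>.\<close>

lemma spectral_cut_closed:
  assumes mem: "X \<in> A"
  obtains E :: "'h \<Rightarrow>\<^sub>L 'h" where "E \<in> A" "E o\<^sub>L E = E" "op_commute X E"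
    "\<And>y. E y = y \<Longrightarrow> inner (X y) y \<le> \<delta> * (norm y)\<^sup>2"
    "pos_op ((X - \<delta> *\<^sub>R id_blinfun) o\<^sub>L (id_blinfun - E))"
proof -
  define Y where "Y = X - \<delta> *\<^sub>R id_blinfun"
  have Y_mem: "Y \<in> A" unfolding Y_def by (intro diff_closed scaleR_closed id_closed mem)
  have "pos_op (Y o\<^sub>L Y)" using pos_op_sandwich[OF sym_op_mem[OF Y_mem] pos_op_id] by simp
  then obtain P where P_mem: "P \<in> A" and P_pos: "pos_op P" and P_sq: "P o\<^sub>L P = Y o\<^sub>L Y"
    and P_comm: "\<And>K. op_commute K (Y o\<^sub>L Y) \<Longrightarrow> op_commute K P"
    using sqrt_closed[OF square_closed[OF Y_mem]] by blast
  have comm_P: "op_commute K P" if "op_commute K Y" for K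
    using P_comm op_commute_compose[OF that that] by blast
  obtain F where F_mem: "F \<in> A" and F_idem: "F o\<^sub>L F = F" and VF: "(P - Y) o\<^sub>L F = 0"
    and F_ker: "\<And>u. (P - Y) u = 0 \<Longrightarrow> F u = u"
    and F_comm: "\<And>K. op_commute K (P - Y) \<Longrightarrow> op_commute K F"
    using kernel_projection_closed[OF diff_closed[OF P_mem Y_mem]] by blast
  have comm_F: "op_commute K F" if "op_commute K Y" for K
    by (intro F_comm op_commute_diff comm_P that)
  have YP: "op_commute Y P" by (rule comm_P[OF op_commute_refl])
  have PF: "op_commute P F" by (intro F_comm op_commute_diff op_commute_refl op_commute_sym[OF YP])
  have XY: "op_commute X Y"
    unfolding Y_def by (intro op_commute_diff op_commute_refl op_commute_scaleR op_commute_id)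
  note split = sign_split_kernel_projection[OF P_pos P_sq YP sym_op_mem[OF F_mem] F_idem VF F_ker PF
      comm_F[OF op_commute_refl]]
  show ?thesis
  proof (rule that)
    show "id_blinfun - F \<in> A" by (intro diff_closed id_closed F_mem)
    show "(id_blinfun - F) o\<^sub>L (id_blinfun - F) = id_blinfun - F"
      using F_idem by (simp add: blinfun_compose_linear)
    show "op_commute X (id_blinfun - F)" by (intro op_commute_diff op_commute_id comm_F XY)
    show "inner (X y) y \<le> \<delta> * (norm y)\<^sup>2" if "(id_blinfun - F) y = y" for y
      using split(1)[of y] that unfolding Y_def by (simp add: inner_diff_left power2_norm_eq_inner)
    show "pos_op ((X - \<delta> *\<^sub>R id_blinfun) o\<^sub>L (id_blinfun - (id_blinfun - F)))"
      using split(2) unfolding Y_def by simp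
  qed
qed

lemma pos_part_iff: "a \<in> pos_part J A \<longleftrightarrow> a \<in> A \<and> pos_op a"
  using sym_op_mem self_adj_mem unfolding pos_part_def positive_op_def pos_op_def by blast

lemma op_le_iff_loewner_le: "op_le J a b \<longleftrightarrow> self_adj J a \<and> self_adj J b \<and> loewner_le a b"
  unfolding op_le_def positive_op_def loewner_le_iff_pos_op pos_op_def self_adj_def sym_op_def BH_def
  by (auto simp: blinfun_compose_linear inner_diff_left inner_diff_right)

end

section \<open>States\<close>

locale JW_state = JW J A for J :: "'h::{real_inner,complete_space} \<Rightarrow>\<^sub>L 'h" and A +
  fixes \<rho> :: "('h \<Rightarrow>\<^sub>L 'h) \<Rightarrow> real"
  assumes is_state: "is_state J A \<rho>"
begin

lemma state_add: "a \<in> A \<Longrightarrow> b \<in> A \<Longrightarrow> \<rho> (a + b) = \<rho> a + \<rho> b"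
  using is_state unfolding is_state_def by blast

lemma state_scaleR: "a \<in> A \<Longrightarrow> \<rho> (c *\<^sub>R a) = c * \<rho> a"
  using is_state unfolding is_state_def by blast

lemma state_nonneg: "a \<in> A \<Longrightarrow> pos_op a \<Longrightarrow> 0 \<le> \<rho> a"
  using is_state pos_part_iff unfolding is_state_def by blast

lemma state_diff: "a \<in> A \<Longrightarrow> b \<in> A \<Longrightarrow> \<rho> (a - b) = \<rho> a - \<rho> b"
  using state_add[of b "a - b"] diff_closed by simp

lemma state_mono: "a \<in> A \<Longrightarrow> b \<in> A \<Longrightarrow> loewner_le a b \<Longrightarrow> \<rho> a \<le> \<rho> b"
  using state_nonneg[OF diff_closed, of b a] state_diff[of b a] loewner_le_iff_pos_op by auto

lemma state_sum: "(\<And>k. k \<in> K \<Longrightarrow> D k \<in> A) \<Longrightarrow> \<rho> (sum D K) = (\<Sum>k\<in>K. \<rho> (D k))"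
proof (induction K rule: infinite_finite_induct)
  case (infinite K)
  then show ?case using state_scaleR[OF zero_closed, of 0] by simp
next
  case empty
  then show ?case using state_scaleR[OF zero_closed, of 0] by simp
next
  case (insert k K)
  then show ?case by (simp add: state_add sum_closed)
qed

lemma state_complement_of_cut_le:
  assumes X_mem: "X \<in> A" and X_pos: "pos_op X" and E_mem: "E \<in> A" and E_idem: "E o\<^sub>L E = E"
    and comm: "op_commute X E" and cut: "pos_op ((X - \<delta> *\<^sub>R id_blinfun) o\<^sub>L (id_blinfun - E))"
  shows "\<delta> * \<rho> (id_blinfun - E) \<le> \<rho> X"
proof -
  define F where "F = id_blinfun - E"
  define G where "G = (X - \<delta> *\<^sub>R id_blinfun) o\<^sub>L F"
  have F_mem: "F \<in> A" unfolding F_def by (intro diff_closed id_closed E_mem)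
  have comm_F: "op_commute X F" unfolding F_def by (intro op_commute_diff op_commute_id comm)
  have XE_mem: "X o\<^sub>L E \<in> A" by (rule compose_closed[OF X_mem E_mem comm])
  have G_mem: "G \<in> A"
    using diff_closed[OF compose_closed[OF X_mem F_mem comm_F] scaleR_closed[OF F_mem, of \<delta>]]
    unfolding G_def by (simp add: blinfun_compose_linear)
  have split: "(X o\<^sub>L E) + (\<delta> *\<^sub>R F + G) = X"
    unfolding F_def G_def by (simp add: blinfun_compose_linear algebra_simps)
  have "\<rho> X = \<rho> (X o\<^sub>L E) + \<rho> (\<delta> *\<^sub>R F + G)"
    using state_add[OF XE_mem add_closed[OF scaleR_closed[OF F_mem, of \<delta>] G_mem]] unfolding split .
  also have "\<rho> (\<delta> *\<^sub>R F + G) = \<delta> * \<rho> F + \<rho> G"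
    using state_add[OF scaleR_closed[OF F_mem] G_mem] state_scaleR[OF F_mem] by simp
  finally have "\<rho> X = \<rho> (X o\<^sub>L E) + \<delta> * \<rho> F + \<rho> G" by simp
  moreover have "0 \<le> \<rho> (X o\<^sub>L E)"
    using XE_mem pos_op_compose_projection[OF X_pos comm E_idem sym_op_mem[OF E_mem]] by (rule state_nonneg)
  moreover have "0 \<le> \<rho> G" using G_mem cut unfolding G_def F_def by (rule state_nonneg)
  ultimately show ?thesis unfolding F_def by linarith
qed

lemma normal_state_strong_limit_le:
  assumes normal: "normal_state J A \<rho>"
    and mem: "\<And>n. S n \<in> A" and pos: "\<And>n. pos_op (S n)" and inc: "\<And>n. loewner_le (S n) (S (Suc n))"
    and L_mem: "L \<in> A" and lim: "\<And>x. (\<lambda>n. S n x) \<longlonglongrightarrow> L x" and bound: "\<And>n. \<rho> (S n) \<le> \<sigma>"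
  shows "\<rho> L \<le> \<sigma>"
proof -
  have sym: "sym_op (S n)" for n using pos by (rule pos_op_sym)
  have "\<rho> L = Sup (\<rho> ` range S)"
  proof (rule normal[unfolded normal_state_def, rule_format], intro conjI)
    show "range S \<noteq> {}" by simp
    show "range S \<subseteq> pos_part J A" using mem pos pos_part_iff by blast
    show "\<forall>x\<in>range S. \<forall>y\<in>range S. \<exists>z\<in>range S. op_le J x z \<and> op_le J y z"
    proof (intro ballI)
      fix x y assume "x \<in> range S" "y \<in> range S"
      then obtain i j where "x = S i" "y = S j" by blast
      moreover have "loewner_le (S i) (S (max i j))" "loewner_le (S j) (S (max i j))"
        using loewner_le_incseq[of S, OF inc sym] by simp_all
      ultimately show "\<exists>z\<in>range S. op_le J x z \<and> op_le J y z"
        using op_le_iff_loewner_le self_adj_mem mem by blast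
    qed
    show "\<forall>x\<in>range S. op_le J x L"
      using op_le_iff_loewner_le self_adj_mem mem L_mem incseq_le_strong_limit[OF lim sym inc] by blast
    show "\<forall>t. self_adj J t \<and> (\<forall>x\<in>range S. op_le J x t) \<longrightarrow> op_le J L t"
    proof (intro allI impI)
      fix t assume t: "self_adj J t \<and> (\<forall>x\<in>range S. op_le J x t)"
      then have "loewner_le (S n) t" for n using op_le_iff_loewner_le by blast
      then have "loewner_le L t" by (rule loewner_le_strong_limit[OF lim])
      then show "op_le J L t" using t op_le_iff_loewner_le self_adj_mem[OF L_mem] by blast
    qed
  qed
  also have "\<dots> \<le> \<sigma>" using bound by (intro cSup_least) auto
  finally show ?thesis .
qed

lemma resolvent_supremum:
  assumes normal: "normal_state J A \<rho>"
    and mem: "\<And>m. T m \<in> A" and pos: "\<And>m. pos_op (T m)" and inc: "\<And>m. loewner_le (T m) (T (Suc m))"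
    and bound: "\<And>m. \<rho> (T m) \<le> \<sigma>"
  obtains X R where "\<And>m. op_inverse (id_blinfun + T m) (X m)" "R \<in> A" "pos_op R" "norm R \<le> 1"
    "\<And>m. loewner_le (id_blinfun - X m) R" "\<rho> R \<le> \<sigma>"
proof -
  have "\<forall>m. \<exists>X. X \<in> A \<and> op_inverse (id_blinfun + T m) X"
    using resolvent_closed[OF mem pos] by metis
  then obtain X where X_mem: "\<And>m. X m \<in> A" and inv: "\<And>m. op_inverse (id_blinfun + T m) (X m)"
    by metis
  define S where "S m = id_blinfun - X m" for m
  have S_mem: "S m \<in> A" for m unfolding S_def by (intro diff_closed id_closed X_mem)
  have S_pos: "pos_op (S m)" for m
    using resolvent_le_id[OF pos inv] unfolding S_def loewner_le_iff_pos_op by blast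
  have S_inc: "loewner_le (S m) (S (Suc m))" for m
    unfolding S_def by (intro loewner_le_diff_right sym_op_id resolvent_antimono[OF pos pos inc inv inv])
  have "norm (S m) \<le> 1" for m
    using pos_opD[OF pos_op_resolvent[OF pos inv]] unfolding S_def
    by (intro pos_op_norm_le[OF S_pos[unfolded S_def]]) (auto simp: inner_diff_left power2_norm_eq_inner)
  then obtain R :: "'h \<Rightarrow>\<^sub>L 'h" where lim: "\<And>x. (\<lambda>m. S m x) \<longlonglongrightarrow> R x" and "norm R \<le> 1"
    and le: "\<And>m. loewner_le (S m) R"
    by (rule monotone_strong_limit[of S, OF pos_op_sym[OF S_pos] S_inc]) blast
  moreover have R_mem: "R \<in> A" using S_mem lim by (rule strong_limit_closed)
  moreover have "pos_op R"
    using pos_op_add[OF S_pos[of 0] le[of 0, unfolded loewner_le_iff_pos_op, THEN conjunct2, THEN conjunct2]]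
    by simp
  moreover have "loewner_le (S m) (T m)" for m unfolding S_def by (rule id_minus_resolvent_le[OF pos inv])
  then have "\<rho> (S m) \<le> \<sigma>" for m using state_mono[OF S_mem mem] bound order_trans by blast
  then have "\<rho> R \<le> \<sigma>"
    by (rule normal_state_strong_limit_le[OF normal S_mem S_pos S_inc R_mem lim])
  ultimately show ?thesis using that inv le unfolding S_def by blast
qed

end

section \<open>Compressions to the range of a projection\<close>

lemma norm_projection_apply_le:
  assumes "sym_op E" "E o\<^sub>L E = E"
  shows "norm (E x) \<le> norm x"
proof -
  have "(norm (E x))\<^sup>2 = inner (E x) x"
    using sym_opD[OF assms(1), of "E x" x] arg_cong[OF assms(2), of "\<lambda>T. T x"]
    by (simp add: power2_norm_eq_inner)
  also have "\<dots> \<le> norm (E x) * norm x" by (rule norm_cauchy_schwarz)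
  finally show ?thesis by (cases "E x = 0") (simp_all add: power2_eq_square)
qed

lemma quadratic_form_compression_le:
  assumes M_pos: "pos_op M" and E_sym: "sym_op E" and E_idem: "E o\<^sub>L E = E" and comm: "op_commute M E"
  shows "inner (M (E z)) (E z) \<le> inner (M z) z"
proof -
  define F where "F = id_blinfun - E"
  have EF: "E (F u) = 0" and FE: "F (E u) = 0" for u
    using arg_cong[OF E_idem, of "\<lambda>T. T u"] unfolding F_def by simp_all
  have F_sym: "sym_op F" unfolding F_def by (intro sym_op_diff sym_op_id E_sym)
  have "inner (M (E z)) (F z) = 0"
    using sym_opD[OF E_sym, of "M z" "F z"] op_commute_apply[OF comm, of z] EF by simp
  moreover have "inner (M (F z)) (E z) = 0"
    using sym_opD[OF F_sym, of "M z" "E z"] op_commute_apply[OF comm, of z] FE unfolding F_def by simp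
  moreover have "z = E z + F z" unfolding F_def by simp
  then have "inner (M z) z = inner (M (E z + F z)) (E z + F z)" by simp
  ultimately have "inner (M z) z = inner (M (E z)) (E z) + inner (M (F z)) (F z)"
    by (simp add: inner_add_left inner_add_right)
  then show ?thesis using pos_opD[OF M_pos, of "F z"] by linarith
qed

lemma scaled_le_square:
  fixes a q s t :: real
  assumes "0 < a" "a * t\<^sup>2 \<le> q" "q \<le> s * t" "0 \<le> s" "0 \<le> t"
  shows "a * q \<le> s\<^sup>2"
proof (cases "t = 0")
  case True
  then have "q \<le> 0" using assms(3) by simp
  then show ?thesis using mult_nonneg_nonpos[of a q] assms(1) zero_le_power2[of s] by linarith
next
  case False
  have "(a * t) * t \<le> s * t" using assms(2,3) by (simp add: power2_eq_square mult.assoc)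
  then have at: "a * t \<le> s" by (rule mult_right_le_imp_le) (use False assms(5) in simp)
  have "a * q \<le> a * (s * t)" using assms(1,3) by (simp add: mult_left_mono)
  also have "\<dots> = s * (a * t)" by simp
  also have "\<dots> \<le> s * s" using at assms(4) by (rule mult_left_mono)
  finally show ?thesis by (simp add: power2_eq_square)
qed

text \<open>Evaluate the quadratic forms at \<open>z = (1 + T) y\<close>, for which \<open>X z = y\<close>.\<close>

lemma resolvent_compression_bound:
  assumes inv: "op_inverse (id_blinfun + T) X"
    and le: "loewner_le (id_blinfun - X) R" and R_norm: "norm R \<le> 1"
    and E_sym: "sym_op E" and E_idem: "E o\<^sub>L E = E" and comm: "op_commute R E"
    and cut: "\<And>y. E y = y \<Longrightarrow> inner (R y) y \<le> \<delta> * (norm y)\<^sup>2" and "\<delta> < 1"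
    and Ey: "E y = y"
  shows "(1 - \<delta>) * inner (T y) y \<le> \<delta> * (norm y)\<^sup>2"
proof -
  define M where "M = id_blinfun - R"
  have M_pos: "pos_op M"
    unfolding M_def using le R_norm by (intro pos_op_id_minus) (auto simp: loewner_le_def)
  have comm_M: "op_commute M E"
    unfolding M_def by (rule op_commute_sym[OF op_commute_diff[OF op_commute_id op_commute_sym[OF comm]]])
  define z where "z = (id_blinfun + T) y"
  define q where "q = inner y z"
  have q_eq: "q = (norm y)\<^sup>2 + inner (T y) y"
    unfolding q_def z_def by (simp add: inner_add_right power2_norm_eq_inner inner_commute)
  have "(1 - \<delta>) * (norm (E z))\<^sup>2 \<le> inner (M (E z)) (E z)"
    using cut[of "E z"] arg_cong[OF E_idem, of "\<lambda>T. T z"] unfolding M_def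
    by (simp add: inner_diff_left power2_norm_eq_inner algebra_simps)
  also have "\<dots> \<le> inner (M z) z" by (rule quadratic_form_compression_le[OF M_pos E_sym E_idem comm_M])
  also have "\<dots> \<le> inner (X z) z"
  proof -
    have "inner ((id_blinfun - X) z) z \<le> inner (R z) z" using le unfolding loewner_le_def by blast
    then show ?thesis unfolding M_def by (simp add: inner_diff_left)
  qed
  also have "\<dots> = q" unfolding q_def z_def using op_inverse_apply(2)[OF inv] by (simp add: inner_commute)
  finally have lower: "(1 - \<delta>) * (norm (E z))\<^sup>2 \<le> q" .
  have "q = inner y (E z)" using sym_opD[OF E_sym, of y z] Ey unfolding q_def by simp
  also have "\<dots> \<le> norm y * norm (E z)" by (rule norm_cauchy_schwarz)
  finally have "(1 - \<delta>) * q \<le> (norm y)\<^sup>2"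
    using lower \<open>\<delta> < 1\<close> by (intro scaled_le_square) auto
  then show ?thesis unfolding q_eq by (simp add: algebra_simps)
qed

lemma norm_compression_le:
  assumes T_pos: "pos_op T" and E_sym: "sym_op E" and E_idem: "E o\<^sub>L E = E" and "0 \<le> \<kappa>"
    and bound: "\<And>y. E y = y \<Longrightarrow> inner (T y) y \<le> \<kappa> * (norm y)\<^sup>2"
  shows "norm (E o\<^sub>L T o\<^sub>L E) \<le> \<kappa>"
proof (rule pos_op_norm_le[OF pos_op_sandwich[OF E_sym T_pos] \<open>0 \<le> \<kappa>\<close>])
  fix x
  have "inner ((E o\<^sub>L T o\<^sub>L E) x) x = inner (T (E x)) (E x)" using sym_opD[OF E_sym] by simp
  also have "\<dots> \<le> \<kappa> * (norm (E x))\<^sup>2"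
    using bound arg_cong[OF E_idem, of "\<lambda>T. T x"] by simp
  also have "\<dots> \<le> \<kappa> * (norm x)\<^sup>2"
    using norm_projection_apply_le[OF E_sym E_idem] \<open>0 \<le> \<kappa>\<close> by (simp add: mult_left_mono power_mono)
  finally show "inner ((E o\<^sub>L T o\<^sub>L E) x) x \<le> \<kappa> * (norm x)\<^sup>2" .
qed

context JW_state
begin

lemma small_projection_compressing_increasing:
  assumes normal: "normal_state J A \<rho>"
    and mem: "\<And>m. T m \<in> A" and pos: "\<And>m. pos_op (T m)" and inc: "\<And>m. loewner_le (T m) (T (Suc m))"
    and bound: "\<And>m. \<rho> (T m) \<le> \<sigma>" and "\<sigma> < \<delta>\<^sup>2" and "0 < \<delta>" "\<delta> < 1"
  obtains E where "E \<in> A" "E o\<^sub>L E = E" "\<rho> (id_blinfun - E) < \<delta>"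
    "\<And>m. (1 - \<delta>) * norm (E o\<^sub>L T m o\<^sub>L E) \<le> \<delta>"
proof -
  obtain X R where inv: "\<And>m. op_inverse (id_blinfun + T m) (X m)" and R_mem: "R \<in> A"
    and R_pos: "pos_op R" and R_norm: "norm R \<le> 1" and X_R: "\<And>m. loewner_le (id_blinfun - X m) R"
    and "\<rho> R \<le> \<sigma>"
    using resolvent_supremum[where T = T, OF normal mem pos inc bound] by blast
  obtain E where E_mem: "E \<in> A" and E_idem: "E o\<^sub>L E = E" and comm: "op_commute R E"
    and cut: "\<And>y. E y = y \<Longrightarrow> inner (R y) y \<le> \<delta> * (norm y)\<^sup>2"
    and cut_pos: "pos_op ((R - \<delta> *\<^sub>R id_blinfun) o\<^sub>L (id_blinfun - E))"
    using spectral_cut_closed[OF R_mem] by blast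
  have E_sym: "sym_op E" using E_mem by (rule sym_op_mem)
  have "\<delta> * \<rho> (id_blinfun - E) \<le> \<rho> R"
    by (rule state_complement_of_cut_le[OF R_mem R_pos E_mem E_idem comm cut_pos])
  then have "\<delta> * \<rho> (id_blinfun - E) < \<delta> * \<delta>"
    using \<open>\<rho> R \<le> \<sigma>\<close> \<open>\<sigma> < \<delta>\<^sup>2\<close> by (simp add: power2_eq_square)
  then have "\<rho> (id_blinfun - E) < \<delta>" using \<open>0 < \<delta>\<close> by simp
  moreover have "(1 - \<delta>) * norm (E o\<^sub>L T m o\<^sub>L E) \<le> \<delta>" for m
  proof -
    have "inner (T m y) y \<le> \<delta> / (1 - \<delta>) * (norm y)\<^sup>2" if "E y = y" for y
    proof -
      have "(1 - \<delta>) * inner (T m y) y \<le> \<delta> * (norm y)\<^sup>2"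
        using inv[of m] X_R[of m] R_norm E_sym E_idem comm cut \<open>\<delta> < 1\<close> that
        by (rule resolvent_compression_bound)
      then show ?thesis using \<open>\<delta> < 1\<close> by (simp add: le_divide_eq mult.commute)
    qed
    then have "norm (E o\<^sub>L T m o\<^sub>L E) \<le> \<delta> / (1 - \<delta>)"
      using \<open>0 < \<delta>\<close> \<open>\<delta> < 1\<close> by (intro norm_compression_le[OF pos E_sym E_idem]) auto
    then show ?thesis using \<open>\<delta> < 1\<close> by (simp add: field_simps)
  qed
  ultimately show ?thesis using that E_mem E_idem by blast
qed

lemma partial_sums_pos_part:
  assumes D: "\<forall>m\<ge>1. D m \<in> pos_part J A" and summable: "summable (\<lambda>m. \<rho> (D (Suc m)))"
  shows "(\<Sum>k=1..m. D k) \<in> A" and "pos_op (\<Sum>k=1..m. D k)"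
    and "loewner_le (\<Sum>k=1..m. D k) (\<Sum>k=1..Suc m. D k)"
    and "\<rho> (\<Sum>k=1..m. D k) \<le> (\<Sum>m. \<rho> (D (Suc m)))"
proof -
  have D: "D k \<in> A" "pos_op (D k)" if "k \<ge> 1" for k using D that pos_part_iff by blast+
  show mem: "(\<Sum>k=1..m. D k) \<in> A" for m using D by (auto intro!: sum_closed)
  show pos: "pos_op (\<Sum>k=1..m. D k)" for m using D by (auto intro!: pos_op_sum)
  show "loewner_le (\<Sum>k=1..m. D k) (\<Sum>k=1..Suc m. D k)"
    using pos D(2)[of "Suc m"] unfolding loewner_le_iff_pos_op by (simp add: sym_op_add pos_op_sym)
  have "\<rho> (\<Sum>k=1..m. D k) = (\<Sum>k<m. \<rho> (D (Suc k)))"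
    using D by (simp add: state_sum sum.atLeast1_atMost_eq)
  also have "\<dots> \<le> (\<Sum>m. \<rho> (D (Suc m)))"
    using summable D by (intro sum_le_suminf) (auto intro: state_nonneg)
  finally show "\<rho> (\<Sum>k=1..m. D k) \<le> (\<Sum>m. \<rho> (D (Suc m)))" .
qed

end

lemma sqrt_lt_two_root4:
  fixes \<epsilon> :: real
  assumes "0 < \<epsilon>" "\<epsilon> < 1"
  shows "sqrt \<epsilon> < 2 * \<epsilon> powr (1/4)"
proof -
  have "sqrt \<epsilon> = \<epsilon> powr (1/4) * \<epsilon> powr (1/4)"
    using assms(1) by (simp add: powr_add[symmetric] powr_half_sqrt)
  also have "\<dots> < \<epsilon> powr (1/4) * 1"
    using assms powr_less_mono2[of "1/4" \<epsilon> 1] by (intro mult_strict_left_mono) simp_all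
  also have "\<dots> < 2 * \<epsilon> powr (1/4)" using assms(1) by simp
  finally show ?thesis .
qed

theorem lemma3p4:
  fixes J :: "'h::{real_inner,complete_space} \<Rightarrow>\<^sub>L 'h"
    and A :: "('h \<Rightarrow>\<^sub>L 'h) set"
    and \<rho> :: "('h \<Rightarrow>\<^sub>L 'h) \<Rightarrow> real"
    and \<epsilon> :: real
    and D :: "nat \<Rightarrow> ('h \<Rightarrow>\<^sub>L 'h)"
  assumes "JW_algebra J A" and "reversible A"
    and "is_state J A \<rho>" and "faithful_state J A \<rho>" and "normal_state J A \<rho>"
    and "0 < \<epsilon>" and "\<epsilon> < 1/16"
    and "\<forall>m\<ge>1. D m \<in> pos_part J A"
    and "summable (\<lambda>m. \<rho> (D (Suc m)))"
    and "(\<Sum>m. \<rho> (D (Suc m))) < \<epsilon>"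
  shows "\<exists>E\<in>A. is_projection E \<and> \<rho> (id_blinfun - E) < 2 * \<epsilon> powr (1/4) \<and>
           (\<forall>m\<ge>1. norm (E o\<^sub>L (\<Sum>k=1..m. D k) o\<^sub>L E) < 4 * sqrt \<epsilon>)"
proof -
  interpret JW_state J A \<rho> by unfold_locales (fact assms(1), fact assms(3))
  define T where "T m = (\<Sum>k=1..m. D k)" for m
  define \<delta> where "\<delta> = sqrt \<epsilon>"
  have \<delta>: "0 < \<delta>" "\<delta> < 1/4" "\<delta>\<^sup>2 = \<epsilon>"
    unfolding \<delta>_def using assms(6,7) real_sqrt_less_mono[of \<epsilon> "1/16"] by (simp_all add: real_sqrt_divide)
  note T = partial_sums_pos_part[OF assms(8,9), folded T_def]
  have "(\<Sum>m. \<rho> (D (Suc m))) < \<delta>\<^sup>2" "\<delta> < 1" using assms(10) \<delta> by simp_all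
  then obtain E where E_mem: "E \<in> A" and E_idem: "E o\<^sub>L E = E" and E_small: "\<rho> (id_blinfun - E) < \<delta>"
    and compress: "\<And>m. (1 - \<delta>) * norm (E o\<^sub>L T m o\<^sub>L E) \<le> \<delta>"
    using small_projection_compressing_increasing[where T = T, OF assms(5) T _ \<delta>(1)] by metis
  have "\<delta> < 2 * \<epsilon> powr (1/4)" unfolding \<delta>_def using assms(6,7) by (intro sqrt_lt_two_root4) auto
  moreover have "norm (E o\<^sub>L T m o\<^sub>L E) < 4 * \<delta>" for m
  proof -
    have "(3/4) * norm (E o\<^sub>L T m o\<^sub>L E) \<le> (1 - \<delta>) * norm (E o\<^sub>L T m o\<^sub>L E)"
      using \<delta>(2) by (intro mult_right_mono) auto
    then show ?thesis using compress[of m] \<delta>(1) by linarith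
  qed
  ultimately show ?thesis
    using E_mem E_idem E_small unfolding is_projection_def T_def \<delta>_def by force
qed

end
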